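(* Let $m\equiv0\pmod8$ and $\mathfrak n_m^{(p)}=(\mathfrak v_m)^p\oplus\mathbb R^m$. Then ${\rm Aut}_o(\mathfrak n_m^{(p)})$ has $p+1$ orbits in ${\rm Lag}(\mathfrak n_m^{(p)})$, of the form $O(p)/\big(O(r)\times O(p-r)\big)$, $r=0,\dots,p$; i.e. for each $r$ the corresponding orbit is an orbit of a subgroup of ${\rm Aut}_o(\mathfrak n_m^{(p)})$ isomorphic to $O(p)$, with isotropy subgroup isomorphic to $O(r)\times O(p-r)$.
   Context: $C(m)$ is the real Clifford algebra of $\mathbb R^m$ (relations $z^2=-\langle z,z\rangle1$); for $m\not\equiv3\pmod4$, $\mathfrak v_m$ is the unique irreducible $C(m)$-module up to isomorphism, with an inner product making each $J_z$ skew-symmetric, and $(\mathfrak v_m)^p$ the direct sum of $p$ copies. $\mathfrak n_m^{(p)}$ is the Lie algebra of Heisenberg type with $\mathbb R^m$ central and $\langle z,[u,v]\rangle=(J_zu,v)$. ${\rm Lag}(\mathfrak n)$ is the set of subspaces $\mathcal L$ of $\mathfrak v=(\mathfrak v_m)^p$ with $[\mathcal L,\mathcal L]=0$, $\dim\mathcal L=\frac12\dim\mathfrak v$. ${\rm Aut}_o(\mathfrak n)$ is the group of linear automorphisms $\xi$ of $\mathfrak v$ with $[\xi u,\xi v]=[u,v]$. Notation $A/B$ for an orbit: an orbit of a subgroup $A$ of ${\rm Aut}_o(\mathfrak n)$ with isotropy subgroup $B$. *)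

theory Defs
  imports "HOL-Analysis.Analysis" "HOL-Algebra.Group"
begin

definition clifford_module :: "('z::euclidean_space \<Rightarrow> 'v::euclidean_space \<Rightarrow> 'v) \<Rightarrow> bool" where
  "clifford_module J \<longleftrightarrow>
     (\<forall>z. linear (J z)) \<and> (\<forall>v. linear (\<lambda>z. J z v)) \<and>
     (\<forall>z v. J z (J z v) = - (z \<bullet> z) *\<^sub>R v) \<and>
     (\<forall>z u v. (J z u) \<bullet> v = - (u \<bullet> (J z v)))"

definition invariant_subspace :: "('z::euclidean_space \<Rightarrow> 'v::euclidean_space \<Rightarrow> 'v) \<Rightarrow> 'v set \<Rightarrow> bool" where
  "invariant_subspace J W \<longleftrightarrow> subspace W \<and> (\<forall>z. J z ` W \<subseteq> W)"

definition irreducible_submodule :: "('z::euclidean_space \<Rightarrow> 'v::euclidean_space \<Rightarrow> 'v) \<Rightarrow> 'v set \<Rightarrow> bool" where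
  "irreducible_submodule J W \<longleftrightarrow> invariant_subspace J W \<and> W \<noteq> {0} \<and>
     (\<forall>U. invariant_subspace J U \<and> U \<subseteq> W \<longrightarrow> U = {0} \<or> U = W)"

definition sum_of_irreducibles :: "('z::euclidean_space \<Rightarrow> 'v::euclidean_space \<Rightarrow> 'v) \<Rightarrow> nat \<Rightarrow> bool" where
  "sum_of_irreducibles J p \<longleftrightarrow>
     (\<exists>W :: nat \<Rightarrow> 'v set.
        (\<forall>i<p. irreducible_submodule J (W i)) \<and>
        (\<forall>i<p. \<forall>j<p. i \<noteq> j \<longrightarrow> (\<forall>u\<in>W i. \<forall>v\<in>W j. u \<bullet> v = 0)) \<and>
        span (\<Union>i<p. W i) = UNIV)"

text \<open>Lie bracket of the H-type algebra: <z,[u,v]> = (J z u, v).\<close>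
definition hbracket :: "('z::euclidean_space \<Rightarrow> 'v::euclidean_space \<Rightarrow> 'v) \<Rightarrow> 'v \<Rightarrow> 'v \<Rightarrow> 'z" where
  "hbracket J u v = (\<Sum>b\<in>Basis. ((J b u) \<bullet> v) *\<^sub>R b)"

definition Lag :: "('z::euclidean_space \<Rightarrow> 'v::euclidean_space \<Rightarrow> 'v) \<Rightarrow> 'v set set" where
  "Lag J = {L. subspace L \<and> (\<forall>u\<in>L. \<forall>v\<in>L. hbracket J u v = 0) \<and>
                2 * dim L = DIM('v)}"

definition Aut_o :: "('z::euclidean_space \<Rightarrow> 'v::euclidean_space \<Rightarrow> 'v) \<Rightarrow> ('v \<Rightarrow> 'v) set" where
  "Aut_o J = {\<xi>. linear \<xi> \<and> bij \<xi> \<and> (\<forall>u v. hbracket J (\<xi> u) (\<xi> v) = hbracket J u v)}"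

definition map_group :: "('v \<Rightarrow> 'v) set \<Rightarrow> ('v \<Rightarrow> 'v) monoid" where
  "map_group S = \<lparr>carrier = S, mult = (\<circ>), one = id\<rparr>"

definition Aut_group :: "('z::euclidean_space \<Rightarrow> 'v::euclidean_space \<Rightarrow> 'v) \<Rightarrow> ('v \<Rightarrow> 'v) monoid" where
  "Aut_group J = map_group (Aut_o J)"

definition Lag_orbits :: "('z::euclidean_space \<Rightarrow> 'v::euclidean_space \<Rightarrow> 'v) \<Rightarrow> 'v set set set" where
  "Lag_orbits J = {{\<xi> ` L | \<xi>. \<xi> \<in> Aut_o J} | L. L \<in> Lag J}"

definition mat_mult :: "nat \<Rightarrow> (nat \<Rightarrow> nat \<Rightarrow> real) \<Rightarrow> (nat \<Rightarrow> nat \<Rightarrow> real) \<Rightarrow> (nat \<Rightarrow> nat \<Rightarrow> real)" where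
  "mat_mult n A B = (\<lambda>i j. if i < n \<and> j < n then (\<Sum>k<n. A i k * B k j) else 0)"

definition mat_one :: "nat \<Rightarrow> (nat \<Rightarrow> nat \<Rightarrow> real)" where
  "mat_one n = (\<lambda>i j. if i < n \<and> j < n \<and> i = j then 1 else 0)"

definition orth_group :: "nat \<Rightarrow> (nat \<Rightarrow> nat \<Rightarrow> real) monoid" where
  "orth_group n = \<lparr>carrier = {A. (\<forall>i j. \<not> (i < n \<and> j < n) \<longrightarrow> A i j = 0) \<and>
                                  mat_mult n A (\<lambda>i j. A j i) = mat_one n},
                   mult = mat_mult n, one = mat_one n\<rparr>"

end

(*
  Choose an orthonormal basis e_0, ..., e_(m-1) of R^m, m = 8k, and write J_w for the product
  of the J_(e_i) along a word w of indices. In each block of eight indices the words 0123,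
  0145, 0246 and 01234567 give symmetric involutions J_w, and all 4k of them commute since any
  two of these words overlap in an even number of letters. Their joint fixed space E meets every
  irreducible summand of V in a line, so dim E = p, and every J_w either acts on E as +1 or -1
  or maps E into the orthogonal complement of E. Consequently, writing U' for the orthogonal
  complement of a subspace U of E inside E,

  - every isometry of E extends uniquely to an isometry of V commuting with all J_z; these
    extensions form a subgroup of Aut_o isomorphic to O(E) = O(p);
  - the span Lam U of the J_w U (w even) and J_w U' (w odd) is Lagrangian and meets E in U,
    and every Lagrangian L equals Lam (L inter E);
  - Aut_o commutes with the even products J_a J_b, hence preserves E.

  So r = dim (L inter E) in {0..p} labels the orbits, O(E) acts transitively on each of them,
  and the stabiliser of Lam U is O(U) x O(U').
*)

theory Submission
  imports Defs
begin

section \<open>Orthonormal sequences and block-diagonal orthogonal matrices\<close>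

lemma sum_lessThan_split:
  fixes f :: "nat \<Rightarrow> 'a::comm_monoid_add"
  assumes "r \<le> n"
  shows "(\<Sum>k<n. f k) = (\<Sum>k<r. f k) + (\<Sum>k<n - r. f (k + r))"
proof -
  have "(\<Sum>k<r + d. f k) = (\<Sum>k<r. f k) + (\<Sum>k<d. f (k + r))" for d
    by (induction d) (auto simp: add.commute add.left_commute)
  from this[of "n - r"] show ?thesis using assms by simp
qed

lemma add_mem_sums: "a \<in> A \<Longrightarrow> b \<in> B \<Longrightarrow> a + b \<in> {x + y | x y. x \<in> A \<and> y \<in> B}" by blast

definition orthonormal_seq :: "nat \<Rightarrow> (nat \<Rightarrow> 'v::euclidean_space) \<Rightarrow> bool" where
  "orthonormal_seq n f \<longleftrightarrow> (\<forall>i<n. \<forall>j<n. f i \<bullet> f j = (if i = j then 1 else 0))"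

lemma orthonormal_seq_mono: "orthonormal_seq n f \<Longrightarrow> r \<le> n \<Longrightarrow> orthonormal_seq r f"
  unfolding orthonormal_seq_def by auto

lemma orthonormal_seq_inj_on: "orthonormal_seq n f \<Longrightarrow> inj_on f {..<n}"
  unfolding orthonormal_seq_def inj_on_def by (metis lessThan_iff zero_neq_one)

lemma orthonormal_seq_independent: "orthonormal_seq n f \<Longrightarrow> independent (f ` {..<n})"
proof (rule pairwise_orthogonal_independent)
  assume o: "orthonormal_seq n f"
  show "pairwise orthogonal (f ` {..<n})"
    using o unfolding orthonormal_seq_def pairwise_def orthogonal_def by auto
  show "0 \<notin> f ` {..<n}" using o unfolding orthonormal_seq_def by force
qed

lemma orthonormal_seq_card: "orthonormal_seq n f \<Longrightarrow> card (f ` {..<n}) = n"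
  using orthonormal_seq_inj_on card_image by fastforce

lemma orthonormal_seq_dim: "orthonormal_seq n f \<Longrightarrow> dim (span (f ` {..<n})) = n"
  using orthonormal_seq_independent orthonormal_seq_card dim_span dim_eq_card_independent by metis

lemma orthonormal_seq_coeff:
  assumes "orthonormal_seq n f" "j < n"
  shows "(\<Sum>i<n. c i *\<^sub>R f i) \<bullet> f j = c j"
proof -
  have "(\<Sum>i<n. c i *\<^sub>R f i) \<bullet> f j = (\<Sum>i<n. c i * (f i \<bullet> f j))" by (simp add: inner_sum_left)
  also have "\<dots> = (\<Sum>i<n. if i = j then c i else 0)"
    using assms unfolding orthonormal_seq_def by (intro sum.cong) auto
  also have "\<dots> = c j" using assms(2) by simp
  finally show ?thesis .
qed

lemma orthonormal_seq_expansion: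
  assumes o: "orthonormal_seq n f" and v: "v \<in> span (f ` {..<n})"
  shows "v = (\<Sum>i<n. (v \<bullet> f i) *\<^sub>R f i)"
proof -
  let ?d = "v - (\<Sum>i<n. (v \<bullet> f i) *\<^sub>R f i)"
  have "(\<Sum>i<n. (v \<bullet> f i) *\<^sub>R f i) \<in> span (f ` {..<n})"
    by (intro span_sum span_scale span_base) auto
  hence dS: "?d \<in> span (f ` {..<n})" using v by (intro span_diff)
  have "?d \<bullet> f j = 0" if "j < n" for j
    using orthonormal_seq_coeff[OF o that] by (simp add: inner_diff_left)
  hence "span (f ` {..<n}) \<subseteq> {x. ?d \<bullet> x = 0}"
    by (intro span_minimal) (auto simp: subspace_def inner_add_right)
  hence "?d \<bullet> ?d = 0" using dS by blast
  thus ?thesis by simp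
qed

lemma orthonormal_seq_parseval:
  assumes o: "orthonormal_seq n f" and "v \<in> span (f ` {..<n})" "w \<in> span (f ` {..<n})"
  shows "v \<bullet> w = (\<Sum>i<n. (v \<bullet> f i) * (w \<bullet> f i))"
proof -
  have "v \<bullet> w = (\<Sum>i<n. (v \<bullet> f i) *\<^sub>R f i) \<bullet> w" using orthonormal_seq_expansion[OF o] assms by simp
  also have "\<dots> = (\<Sum>i<n. (v \<bullet> f i) * (f i \<bullet> w))" by (simp add: inner_sum_left)
  also have "\<dots> = (\<Sum>i<n. (v \<bullet> f i) * (w \<bullet> f i))" by (simp add: inner_commute)
  finally show ?thesis .
qed

lemma orthonormal_seq_span_eq:
  assumes o: "orthonormal_seq n f" and "subspace V" "\<forall>i<n. f i \<in> V" "dim V = n"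
  shows "span (f ` {..<n}) = V"
proof -
  have "V \<subseteq> span (f ` {..<n})"
    using card_eq_dim[of "f ` {..<n}" V] orthonormal_seq_card[OF o] orthonormal_seq_independent[OF o] assms
    by auto
  moreover have "span (f ` {..<n}) \<subseteq> V" using assms by (intro span_minimal) auto
  ultimately show ?thesis by blast
qed

lemma orthonormal_seq_enum:
  assumes "bij_betw f {..<n} B" "pairwise orthogonal B" "\<And>x. x \<in> B \<Longrightarrow> norm x = 1"
  shows "orthonormal_seq n f"
  unfolding orthonormal_seq_def
proof (intro allI impI)
  fix i j assume ij: "i < n" "j < n"
  have B: "f i \<in> B" "f j \<in> B" using assms(1) ij bij_betw_apply by fastforce+
  show "f i \<bullet> f j = (if i = j then 1 else 0)"
  proof (cases "i = j")
    case True
    thus ?thesis using assms(3)[OF B(1)] by (simp add: norm_eq_1)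
  next
    case False
    have "f i \<noteq> f j" using assms(1) ij False unfolding bij_betw_def inj_on_def by auto
    thus ?thesis using assms(2) B False unfolding pairwise_def orthogonal_def by auto
  qed
qed

lemma orthonormal_seq_append:
  assumes "orthonormal_seq r f" "orthonormal_seq s g" "\<forall>i<r. \<forall>j<s. f i \<bullet> g j = 0"
  shows "orthonormal_seq (r + s) (\<lambda>j. if j < r then f j else g (j - r))"
  unfolding orthonormal_seq_def
proof (intro allI impI)
  fix i j assume ij: "i < r + s" "j < r + s"
  show "(if i < r then f i else g (i - r)) \<bullet> (if j < r then f j else g (j - r)) = (if i = j then 1 else 0)"
    using assms ij unfolding orthonormal_seq_def
    by (cases "i < r"; cases "j < r") (auto simp: inner_commute)
qed

lemma orthonormal_seq_basis:
  fixes U :: "'v::euclidean_space set"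
  assumes "subspace U"
  obtains f where "orthonormal_seq (dim U) f" "span (f ` {..<dim U}) = U" "\<forall>i<dim U. f i \<in> U"
proof -
  obtain B where B: "B \<subseteq> U" "pairwise orthogonal B" "\<And>x. x \<in> B \<Longrightarrow> norm x = 1"
    "independent B" "card B = dim U" "span B = U"
    using orthonormal_basis_subspace[OF assms] by metis
  obtain f where f: "bij_betw f {..<dim U} B"
    using ex_bij_betw_nat_finite[OF independent_imp_finite[OF B(4)]] B(5) by (auto simp: atLeast0LessThan)
  have "f ` {..<dim U} = B" using f by (simp add: bij_betw_def)
  thus ?thesis using that orthonormal_seq_enum[OF f B(2,3)] B(1,6) by auto
qed

lemma orth_group_carrier_iff:
  "A \<in> carrier (orth_group n) \<longleftrightarrow> (\<forall>i j. \<not> (i < n \<and> j < n) \<longrightarrow> A i j = 0) \<and>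
     (\<forall>i<n. \<forall>j<n. (\<Sum>k<n. A i k * A j k) = (if i = j then 1 else 0))"
proof -
  have "mat_mult n A (\<lambda>i j. A j i) = mat_one n \<longleftrightarrow>
      (\<forall>i<n. \<forall>j<n. (\<Sum>k<n. A i k * A j k) = (if i = j then 1 else 0))"
    unfolding mat_mult_def mat_one_def by (auto simp: fun_eq_iff)
  thus ?thesis unfolding orth_group_def by auto
qed

lemma carrier_map_group [simp]: "carrier (map_group S) = S"
  and mult_map_group [simp]: "f \<otimes>\<^bsub>map_group S\<^esub> g = f \<circ> g"
  by (simp_all add: map_group_def)

lemma mult_orth_group [simp]: "A \<otimes>\<^bsub>orth_group n\<^esub> B = mat_mult n A B"
  by (simp add: orth_group_def)

lemma iso_restrict_carrier:
  assumes "f \<in> iso G H" "S \<subseteq> carrier G"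
  shows "f \<in> iso (G\<lparr>carrier := S\<rparr>) (H\<lparr>carrier := f ` S\<rparr>)"
  using assms unfolding iso_def hom_def bij_betw_def by (auto intro: inj_on_subset simp: subset_iff)

definition block_diagonal :: "nat \<Rightarrow> nat \<Rightarrow> (nat \<Rightarrow> nat \<Rightarrow> real) \<Rightarrow> bool" where
  "block_diagonal n r Q \<longleftrightarrow> (\<forall>i<n. \<forall>j<n. (i < r) \<noteq> (j < r) \<longrightarrow> Q i j = 0)"

definition upper_block :: "nat \<Rightarrow> (nat \<Rightarrow> nat \<Rightarrow> real) \<Rightarrow> nat \<Rightarrow> nat \<Rightarrow> real" where
  "upper_block r Q = (\<lambda>i j. if i < r \<and> j < r then Q i j else 0)"

definition lower_block :: "nat \<Rightarrow> nat \<Rightarrow> (nat \<Rightarrow> nat \<Rightarrow> real) \<Rightarrow> nat \<Rightarrow> nat \<Rightarrow> real" where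
  "lower_block n r Q = (\<lambda>i j. if i < n - r \<and> j < n - r then Q (i + r) (j + r) else 0)"

definition block_diag ::
    "nat \<Rightarrow> nat \<Rightarrow> (nat \<Rightarrow> nat \<Rightarrow> real) \<Rightarrow> (nat \<Rightarrow> nat \<Rightarrow> real) \<Rightarrow> nat \<Rightarrow> nat \<Rightarrow> real" where
  "block_diag n r A B = (\<lambda>i j. if i < r \<and> j < r then A i j
      else if r \<le> i \<and> i < n \<and> r \<le> j \<and> j < n then B (i - r) (j - r) else 0)"

lemma block_diagonalD:
  "block_diagonal n r Q \<Longrightarrow> i < n \<Longrightarrow> j < n \<Longrightarrow> (i < r) \<noteq> (j < r) \<Longrightarrow> Q i j = 0"
  unfolding block_diagonal_def by blast

lemma blocks_in_orth_group:
  assumes r: "r \<le> n" and Q: "Q \<in> carrier (orth_group n)" and b: "block_diagonal n r Q"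
  shows "upper_block r Q \<in> carrier (orth_group r)"
    and "lower_block n r Q \<in> carrier (orth_group (n - r))"
proof -
  have Qo: "\<forall>i<n. \<forall>j<n. (\<Sum>k<n. Q i k * Q j k) = (if i = j then 1 else 0)"
    using Q orth_group_carrier_iff by blast
  show "upper_block r Q \<in> carrier (orth_group r)" unfolding orth_group_carrier_iff
  proof (intro conjI allI impI)
    fix i j assume ij: "i < r" "j < r"
    have "(\<Sum>k<n. Q i k * Q j k) = (\<Sum>k<r. Q i k * Q j k) + (\<Sum>k<n - r. Q i (k + r) * Q j (k + r))"
      by (rule sum_lessThan_split[OF r])
    also have "(\<Sum>k<n - r. Q i (k + r) * Q j (k + r)) = 0"
      using block_diagonalD[OF b] ij r by (intro sum.neutral) auto
    finally show "(\<Sum>k<r. upper_block r Q i k * upper_block r Q j k) = (if i = j then 1 else 0)"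
      using Qo ij r by (simp add: upper_block_def)
  qed (auto simp: upper_block_def)
  show "lower_block n r Q \<in> carrier (orth_group (n - r))" unfolding orth_group_carrier_iff
  proof (intro conjI allI impI)
    fix i j assume ij: "i < n - r" "j < n - r"
    have "(\<Sum>k<n. Q (i + r) k * Q (j + r) k)
        = (\<Sum>k<r. Q (i + r) k * Q (j + r) k) + (\<Sum>k<n - r. Q (i + r) (k + r) * Q (j + r) (k + r))"
      by (rule sum_lessThan_split[OF r])
    also have "(\<Sum>k<r. Q (i + r) k * Q (j + r) k) = 0"
      using block_diagonalD[OF b] ij r by (intro sum.neutral) auto
    finally show "(\<Sum>k<n - r. lower_block n r Q i k * lower_block n r Q j k) = (if i = j then 1 else 0)"
      using Qo ij r by (simp add: lower_block_def)
  qed (auto simp: lower_block_def)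
qed

lemma upper_block_mult:
  assumes r: "r \<le> n" and b: "block_diagonal n r M"
  shows "upper_block r (mat_mult n M N) = mat_mult r (upper_block r M) (upper_block r N)"
proof (intro ext)
  fix i j
  show "upper_block r (mat_mult n M N) i j = mat_mult r (upper_block r M) (upper_block r N) i j"
  proof (cases "i < r \<and> j < r")
    case True
    have "(\<Sum>k<n. M i k * N k j) = (\<Sum>k<r. M i k * N k j) + (\<Sum>k<n - r. M i (k + r) * N (k + r) j)"
      by (rule sum_lessThan_split[OF r])
    also have "(\<Sum>k<n - r. M i (k + r) * N (k + r) j) = 0"
      using block_diagonalD[OF b] True r by (intro sum.neutral) auto
    finally show ?thesis using True r by (simp add: upper_block_def mat_mult_def)
  qed (auto simp: upper_block_def mat_mult_def)
qed

lemma lower_block_mult: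
  assumes r: "r \<le> n" and b: "block_diagonal n r M"
  shows "lower_block n r (mat_mult n M N) = mat_mult (n - r) (lower_block n r M) (lower_block n r N)"
proof (intro ext)
  fix i j
  show "lower_block n r (mat_mult n M N) i j = mat_mult (n - r) (lower_block n r M) (lower_block n r N) i j"
  proof (cases "i < n - r \<and> j < n - r")
    case True
    have "(\<Sum>k<n. M (i + r) k * N k (j + r))
        = (\<Sum>k<r. M (i + r) k * N k (j + r)) + (\<Sum>k<n - r. M (i + r) (k + r) * N (k + r) (j + r))"
      by (rule sum_lessThan_split[OF r])
    also have "(\<Sum>k<r. M (i + r) k * N k (j + r)) = 0"
      using block_diagonalD[OF b] True r by (intro sum.neutral) auto
    finally show ?thesis using True r by (auto simp: lower_block_def mat_mult_def less_diff_conv)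
  qed (auto simp: lower_block_def mat_mult_def)
qed

lemma block_diag_blocks:
  assumes Q: "Q \<in> carrier (orth_group n)" and b: "block_diagonal n r Q"
  shows "block_diag n r (upper_block r Q) (lower_block n r Q) = Q"
proof (intro ext)
  fix i j
  have outside: "Q i j = 0" if "\<not> (i < n \<and> j < n)" using Q that orth_group_carrier_iff by blast
  show "block_diag n r (upper_block r Q) (lower_block n r Q) i j = Q i j"
  proof (cases "(i < r) = (j < r) \<and> i < n \<and> j < n")
    case True
    thus ?thesis by (auto simp: block_diag_def upper_block_def lower_block_def)
  next
    case False
    hence "Q i j = 0" using outside block_diagonalD[OF b] by (cases "i < n \<and> j < n") auto
    thus ?thesis using False by (auto simp: block_diag_def upper_block_def lower_block_def)
  qed
qed

lemma block_diag_props: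
  assumes r: "r \<le> n"
    and A: "A \<in> carrier (orth_group r)" and B: "B \<in> carrier (orth_group (n - r))"
  shows "block_diag n r A B \<in> carrier (orth_group n)" "block_diagonal n r (block_diag n r A B)"
    "upper_block r (block_diag n r A B) = A" "lower_block n r (block_diag n r A B) = B"
proof -
  have Az: "\<And>i j. \<not> (i < r \<and> j < r) \<Longrightarrow> A i j = 0"
    and Ao: "\<forall>i<r. \<forall>j<r. (\<Sum>k<r. A i k * A j k) = (if i = j then 1 else 0)"
    using A unfolding orth_group_carrier_iff by auto
  have Bz: "\<And>i j. \<not> (i < n - r \<and> j < n - r) \<Longrightarrow> B i j = 0"
    and Bo: "\<forall>i<n - r. \<forall>j<n - r. (\<Sum>k<n - r. B i k * B j k) = (if i = j then 1 else 0)"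
    using B unfolding orth_group_carrier_iff by auto
  let ?Q = "block_diag n r A B"
  show "block_diagonal n r ?Q" unfolding block_diagonal_def block_diag_def by auto
  show "upper_block r ?Q = A" using Az by (auto simp: fun_eq_iff upper_block_def block_diag_def)
  show "lower_block n r ?Q = B" using Bz by (auto simp: fun_eq_iff lower_block_def block_diag_def)
  show "?Q \<in> carrier (orth_group n)" unfolding orth_group_carrier_iff
  proof (intro conjI allI impI)
    fix i j assume ij: "i < n" "j < n"
    let ?upper = "\<Sum>k<r. ?Q i k * ?Q j k" and ?lower = "\<Sum>k<n - r. ?Q i (k + r) * ?Q j (k + r)"
    have split: "(\<Sum>k<n. ?Q i k * ?Q j k) = ?upper + ?lower" by (rule sum_lessThan_split[OF r])
    have "?upper = (if i < r \<and> j < r then \<Sum>k<r. A i k * A j k else 0)"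
      by (auto simp: block_diag_def intro: sum.cong sum.neutral)
    moreover have "?lower = (if r \<le> i \<and> r \<le> j then \<Sum>k<n - r. B (i - r) k * B (j - r) k else 0)"
      using ij by (auto simp: block_diag_def intro: sum.cong sum.neutral)
    ultimately show "(\<Sum>k<n. ?Q i k * ?Q j k) = (if i = j then 1 else 0)"
      using split Ao Bo ij by (auto simp: not_less)
  qed (use r in \<open>auto simp: block_diag_def\<close>)
qed

lemma block_diagonal_orth_iso:
  assumes r: "r \<le> n"
  shows "(\<lambda>Q. (upper_block r Q, lower_block n r Q))
           \<in> iso ((orth_group n)\<lparr>carrier := {Q \<in> carrier (orth_group n). block_diagonal n r Q}\<rparr>)
                 (DirProd (orth_group r) (orth_group (n - r)))"
    (is "?blocks \<in> iso ?S ?D")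
proof -
  have hom: "?blocks \<in> hom ?S ?D"
    using blocks_in_orth_group[OF r] upper_block_mult[OF r] lower_block_mult[OF r]
    by (auto simp: hom_def DirProd_def orth_group_def)
  have "bij_betw ?blocks (carrier ?S) (carrier ?D)"
  proof (rule bij_betw_byWitness[where f'="\<lambda>(A, B). block_diag n r A B"])
    show "\<forall>Q\<in>carrier ?S. (\<lambda>(A, B). block_diag n r A B) (?blocks Q) = Q"
      using block_diag_blocks by auto
    show "\<forall>AB\<in>carrier ?D. ?blocks ((\<lambda>(A, B). block_diag n r A B) AB) = AB"
      using block_diag_props[OF r] by (auto simp: DirProd_def)
    show "?blocks ` carrier ?S \<subseteq> carrier ?D"
      using blocks_in_orth_group[OF r] by (auto simp: DirProd_def)
    show "(\<lambda>(A, B). block_diag n r A B) ` carrier ?D \<subseteq> carrier ?S"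
      using block_diag_props[OF r] by (auto simp: DirProd_def)
  qed
  thus ?thesis using hom unfolding iso_def by blast
qed

section \<open>Words in the Clifford generators\<close>

definition block_words :: "nat list list" where
  "block_words = [[0,1,2,3],[0,1,4,5],[0,2,4,6],[0,1,2,3,4,5,6,7]]"
definition block_duals :: "nat list list" where
  "block_duals = [[3,7],[5,7],[6,7],[7]]"

definition gen_word :: "nat \<Rightarrow> nat \<Rightarrow> nat list" where "gen_word b j = map ((+) (8*b)) (block_words ! j)"
definition dual_word :: "nat \<Rightarrow> nat \<Rightarrow> nat list" where "dual_word b j = map ((+) (8*b)) (block_duals ! j)"
definition gen_words :: "nat \<Rightarrow> nat list list" where
  "gen_words k = concat (map (\<lambda>b. map (gen_word b) [0..<4]) [0..<k])"

text \<open>\<open>(-1) ^ overlap g xs\<close> is the sign by which \<open>J\<^sub>g\<close> and \<open>J\<^sub>x\<^sub>s\<close> commute when \<open>g\<close> has even length.\<close>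
definition overlap :: "nat list \<Rightarrow> nat list \<Rightarrow> nat" where
  "overlap g xs = sum_list (map (count_list g) xs)"

lemma set_gen_words: "set (gen_words k) = {gen_word b j | b j. b < k \<and> j < 4}"
  unfolding gen_words_def by fastforce

lemma add_eq_iff_le_diff: "((c::nat) + a = y) = (c \<le> y \<and> a = y - c)" by auto

lemma count_list_map_add: "count_list (map ((+) c) xs) (y::nat) = (if c \<le> y then count_list xs (y - c) else 0)"
  by (induction xs) (auto simp: add_eq_iff_le_diff)

lemma less_4_cases: "(j::nat) < 4 \<Longrightarrow> j = 0 \<or> j = 1 \<or> j = 2 \<or> j = 3" by auto
lemma less_8_cases: "(j::nat) < 8 \<Longrightarrow> j = 0 \<or> j = 1 \<or> j = 2 \<or> j = 3 \<or> j = 4 \<or> j = 5 \<or> j = 6 \<or> j = 7" by auto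

lemma block_words_less_8: "j < 4 \<Longrightarrow> t \<in> set (block_words ! j) \<Longrightarrow> t < 8"
  unfolding block_words_def using less_4_cases[of j] by auto
lemma block_duals_less_8: "j < 4 \<Longrightarrow> t \<in> set (block_duals ! j) \<Longrightarrow> t < 8"
  unfolding block_duals_def using less_4_cases[of j] by auto

lemma count_list_map_shift_block:
  fixes xs :: "nat list" and y b :: nat
  assumes "\<forall>t\<in>set xs. t < 8"
  shows "count_list (map ((+) (8*b)) xs) y = (if y div 8 = b then count_list xs (y mod 8) else 0)"
proof (cases "y div 8 = b")
  case True
  hence "8*b \<le> y" "y - 8*b = y mod 8" by (auto simp: minus_div_mult_eq_mod[symmetric] mult.commute)
  thus ?thesis using True by (simp add: count_list_map_add)
next
  case False
  show ?thesis
  proof (cases "8*b \<le> y")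
    case True
    hence "y - 8*b \<ge> 8" using False by auto
    hence "y - 8*b \<notin> set xs" using assms by auto
    thus ?thesis using False True by (simp add: count_list_map_add)
  qed (use False in \<open>auto simp: count_list_map_add\<close>)
qed

lemma count_gen_word: "j < 4 \<Longrightarrow> count_list (gen_word b j) y = (if y div 8 = b then count_list (block_words ! j) (y mod 8) else 0)"
  unfolding gen_word_def using block_words_less_8 by (intro count_list_map_shift_block) auto

lemma overlap_gen_word_shifted:
  assumes "\<forall>t\<in>set xs. t < 8" "j < 4"
  shows "overlap (gen_word b j) (map ((+) (8*b')) xs) = (if b = b' then overlap (block_words ! j) xs else 0)"
  using assms(1) unfolding overlap_def
  by (induction xs) (auto simp: count_gen_word[OF assms(2)])

lemma block_words_overlap_even: "j < 4 \<Longrightarrow> j' < 4 \<Longrightarrow> even (overlap (block_words ! j) (block_words ! j'))"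
  unfolding block_words_def overlap_def using less_4_cases[of j] less_4_cases[of j'] by auto
lemma block_duals_overlap_odd_iff: "j < 4 \<Longrightarrow> j' < 4 \<Longrightarrow> odd (overlap (block_words ! j) (block_duals ! j')) \<longleftrightarrow> j = j'"
  unfolding block_words_def block_duals_def overlap_def using less_4_cases[of j] less_4_cases[of j'] by auto

lemma gen_words_overlap_even: "g \<in> set (gen_words k) \<Longrightarrow> h \<in> set (gen_words k) \<Longrightarrow> even (overlap g h)"
proof -
  assume "g \<in> set (gen_words k)" "h \<in> set (gen_words k)"
  then obtain b j b' j' where g: "g = gen_word b j" "j < 4" and h: "h = gen_word b' j'" "j' < 4"
    unfolding set_gen_words by blast
  have "overlap g h = (if b = b' then overlap (block_words ! j) (block_words ! j') else 0)"
    unfolding g h gen_word_def[of b'] using overlap_gen_word_shifted[OF _ g(2)] block_words_less_8[OF h(2)] by (simp add: gen_word_def)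
  thus ?thesis using block_words_overlap_even[OF g(2) h(2)] by simp
qed

lemma gen_word_inj: assumes "j < 4" "j' < 4" "gen_word b j = gen_word b' j'" shows "b = b' \<and> j = j'"
proof -
  have h: "hd (block_words ! j) = 0" "hd (block_words ! j') = 0" "block_words ! j \<noteq> []" "block_words ! j' \<noteq> []"
    using less_4_cases[OF assms(1)] less_4_cases[OF assms(2)] by (auto simp: block_words_def)
  have "hd (gen_word b j) = 8*b" "hd (gen_word b' j') = 8*b'" using h by (auto simp: gen_word_def hd_map)
  hence bb: "b = b'" using assms(3) by simp
  have "block_words ! j = block_words ! j'" using assms(3) unfolding gen_word_def bb by (simp add: inj_map_eq_map)
  hence "j = j'" using less_4_cases[OF assms(1)] less_4_cases[OF assms(2)] by (auto simp: block_words_def)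
  thus ?thesis using bb by simp
qed

lemma gen_words_shape: assumes "g \<in> set (gen_words k)"
  shows "length g = 4 \<or> length g = 8" "distinct g" "set g \<subseteq> {..<8*k}"
proof -
  obtain b j where g: "g = gen_word b j" "b < k" "j < 4" using assms unfolding set_gen_words by blast
  show "length g = 4 \<or> length g = 8" using less_4_cases[OF g(3)] by (auto simp: g gen_word_def block_words_def)
  have "distinct (block_words ! j)" using less_4_cases[OF g(3)] by (auto simp: block_words_def)
  thus "distinct g" by (simp add: g gen_word_def distinct_map)
  have "\<forall>t\<in>set (block_words ! j). 8*b + t < 8*k" using block_words_less_8[OF g(3)] g(2) by fastforce
  thus "set g \<subseteq> {..<8*k}" by (auto simp: g gen_word_def)
qed

lemma dual_word_exists: assumes "g \<in> set (gen_words k)"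
  shows "\<exists>fl. set fl \<subseteq> {..<8*k} \<and> (\<forall>h\<in>set (gen_words k). odd (overlap h fl) \<longleftrightarrow> h = g)"
proof -
  obtain b j where g: "g = gen_word b j" "b < k" "j < 4" using assms unfolding set_gen_words by blast
  show ?thesis
  proof (rule exI[of _ "dual_word b j"], intro conjI ballI)
    have "\<forall>t\<in>set (block_duals ! j). 8*b + t < 8*k" using block_duals_less_8[OF g(3)] g(2) by fastforce
    thus "set (dual_word b j) \<subseteq> {..<8*k}" by (auto simp: dual_word_def)
    fix h assume "h \<in> set (gen_words k)"
    then obtain b' j' where h: "h = gen_word b' j'" "b' < k" "j' < 4" unfolding set_gen_words by blast
    have "overlap h (dual_word b j) = (if b' = b then overlap (block_words ! j') (block_duals ! j) else 0)"
      unfolding h dual_word_def using overlap_gen_word_shifted[OF _ h(3)] block_duals_less_8[OF g(3)] by simp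
    moreover have "h = g \<longleftrightarrow> b' = b \<and> j' = j" using gen_word_inj[OF h(3) g(3)] g h by auto
    ultimately show "odd (overlap h (dual_word b j)) \<longleftrightarrow> h = g"
      using block_duals_overlap_odd_iff[OF h(3) g(3)] by simp
  qed
qed

lemma sum_sum_list_swap:
  "(\<Sum>b\<in>B. sum_list (map (f b) xs)) = sum_list (map (\<lambda>y. \<Sum>b\<in>B. f b y) xs)"
  by (induction xs) (auto simp: sum.distrib)

lemma count_list_distinct_mem: "distinct xs \<Longrightarrow> t \<in> set xs \<Longrightarrow> count_list xs t = 1"
  by (induction xs) auto

lemma count_block_word_3: "(t::nat) < 8 \<Longrightarrow> count_list (block_words ! 3) t = 1"
proof -
  assume "t < 8"
  hence "t \<in> set [0..<8]" by simp
  moreover have "block_words ! 3 = [0..<8]" by (simp add: block_words_def upt_rec)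
  ultimately show ?thesis by (simp add: count_list_distinct_mem)
qed

lemma odd_length_imp_odd_overlap: assumes "set xs \<subseteq> {..<8*k}" "odd (length xs)"
  shows "\<exists>g\<in>set (gen_words k). odd (overlap g xs)"
proof (rule ccontr)
  assume na: "\<not> ?thesis"
  have gin: "gen_word b 3 \<in> set (gen_words k)" if "b < k" for b
    unfolding set_gen_words using that by (intro CollectI exI[of _ b] exI[of _ 3]) simp
  have ev: "\<forall>b<k. even (overlap (gen_word b 3) xs)" using gin na by blast
  have c3: "count_list (gen_word b 3) y = (if y div 8 = b then 1 else 0)" for b y
  proof -
    have "count_list (block_words ! 3) (y mod 8) = 1" by (rule count_block_word_3) simp
    thus ?thesis using count_gen_word[of 3 b y] by simp
  qed
  have "(\<Sum>b<k. overlap (gen_word b 3) xs) = sum_list (map (\<lambda>y. \<Sum>b<k. count_list (gen_word b 3) y) xs)"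
    unfolding overlap_def by (rule sum_sum_list_swap)
  also have "\<dots> = sum_list (map (\<lambda>y. 1) xs)"
  proof -
    have "(\<Sum>b<k. count_list (gen_word b 3) y) = 1" if "y \<in> set xs" for y
    proof -
      have "y < 8 * k" using that assms(1) by auto
      hence "y div 8 < k" by (simp add: div_less_iff_less_mult mult.commute)
      thus ?thesis unfolding c3 by simp
    qed
    thus ?thesis by (intro arg_cong[where f=sum_list] map_cong) auto
  qed
  also have "\<dots> = length xs" by (induction xs) auto
  finally have eq: "(\<Sum>b<k. overlap (gen_word b 3) xs) = length xs" .
  have "even (\<Sum>b<k. overlap (gen_word b 3) xs)" by (rule dvd_sum) (use ev in auto)
  thus False using assms(2) eq by simp
qed

lemma upt_0_4: "[0..<4] = [0::nat,1,2,3]" by (simp add: upt_rec)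

text \<open>Solves the parity system of one block: when the letter counts \<open>c\<close> have even overlap with
  every block word, the block words selected by \<open>block_choice c\<close> have the letter parities of \<open>c\<close>.\<close>

definition block_choice :: "(nat \<Rightarrow> nat) \<Rightarrow> nat \<Rightarrow> bool" where
  "block_choice c j = (if j = 3 then odd (c 7) else if j = 2 then (odd (c 6) \<noteq> odd (c 7))
     else if j = 1 then (odd (c 5) \<noteq> odd (c 7)) else (odd (c 3) \<noteq> odd (c 7)))"

lemma block_choice_parity:
  fixes c :: "nat \<Rightarrow> nat"
  assumes "even (c 0 + c 1 + c 2 + c 3)" "even (c 0 + c 1 + c 4 + c 5)" "even (c 0 + c 2 + c 4 + c 6)"
    "even (c 0 + c 1 + c 2 + c 3 + c 4 + c 5 + c 6 + c 7)" "t < 8"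
  shows "odd (sum_list (map (\<lambda>j. count_list (block_words ! j) t) (filter (block_choice c) [0..<4]))) \<longleftrightarrow> odd (c t)"
  using less_8_cases[OF assms(5)] assms(1-4) unfolding upt_0_4 block_choice_def block_words_def
  by (auto simp: even_add)

lemma overlap_distinct: "distinct g \<Longrightarrow> overlap g xs = sum (count_list xs) (set g)"
proof (induction xs)
  case Nil then show ?case by (simp add: overlap_def)
next
  case (Cons x xs)
  have 1: "overlap g (x # xs) = count_list g x + overlap g xs" by (simp add: overlap_def)
  have 2: "count_list g x = (if x \<in> set g then 1 else 0)" using Cons.prems by (simp add: count_list_distinct_mem)
  have 3: "sum (count_list (x # xs)) (set g) = sum (\<lambda>t. (if x = t then 1 else 0) + count_list xs t) (set g)"
    by (intro sum.cong) auto
  have 4: "\<dots> = (if x \<in> set g then 1 else 0) + sum (count_list xs) (set g)"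
    by (simp add: sum.distrib)
  show ?case using 1 2 3 4 Cons by simp
qed

lemma overlap_gen_word: assumes "j < 4" shows "overlap (gen_word b j) xs = (\<Sum>t\<in>set (block_words ! j). count_list xs (8*b + t))"
proof -
  have d: "distinct (block_words ! j)" using less_4_cases[OF assms] by (auto simp: block_words_def)
  have "overlap (gen_word b j) xs = sum (count_list xs) ((+) (8*b) ` set (block_words ! j))"
    using overlap_distinct[of "gen_word b j"] d by (simp add: gen_word_def distinct_map)
  also have "\<dots> = (\<Sum>t\<in>set (block_words ! j). count_list xs (8*b + t))"
    by (subst sum.reindex) auto
  finally show ?thesis .
qed

lemma sum_list_concat_map: "sum_list (map f (concat xss)) = sum_list (map (\<lambda>xs. sum_list (map f xs)) xss)"
  by (induction xss) auto

lemma sum_list_upt_delta: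
  "sum_list (map (\<lambda>b. if y = b then (f b :: nat) else 0) [0..<k]) = (if y < k then f y else 0)"
  by (induction k) auto

lemma sum_list_count_gen_word: "\<forall>j\<in>set js. j < 4 \<Longrightarrow> sum_list (map (\<lambda>j. count_list (gen_word b j) y) js) =
   (if y div 8 = b then sum_list (map (\<lambda>j. count_list (block_words ! j) (y mod 8)) js) else 0)"
  by (induction js) (auto simp: count_gen_word)

definition chosen_gen_words :: "nat \<Rightarrow> (nat \<Rightarrow> nat \<Rightarrow> nat) \<Rightarrow> nat list list" where
  "chosen_gen_words k c = concat (map (\<lambda>b. map (gen_word b) (filter (block_choice (c b)) [0..<4])) [0..<k])"

lemma set_chosen_gen_words: "set (chosen_gen_words k c) \<subseteq> set (gen_words k)"
  unfolding chosen_gen_words_def set_gen_words by fastforce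

lemma count_chosen_gen_words:
  "count_list (concat (chosen_gen_words k c)) y = (if y div 8 < k then
     sum_list (map (\<lambda>j. count_list (block_words ! j) (y mod 8)) (filter (block_choice (c (y div 8))) [0..<4])) else 0)"
proof -
  have "count_list (concat (chosen_gen_words k c)) y
      = sum_list (map (\<lambda>b. sum_list (map (\<lambda>j. count_list (gen_word b j) y) (filter (block_choice (c b)) [0..<4]))) [0..<k])"
    by (simp add: count_list_concat chosen_gen_words_def sum_list_concat_map comp_def)
  also have "\<dots> = sum_list (map (\<lambda>b. if y div 8 = b then
      sum_list (map (\<lambda>j. count_list (block_words ! j) (y mod 8)) (filter (block_choice (c b)) [0..<4])) else 0) [0..<k])"
    by (intro arg_cong[where f=sum_list] map_cong refl sum_list_count_gen_word) auto
  also have "\<dots> = (if y div 8 < k then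
      sum_list (map (\<lambda>j. count_list (block_words ! j) (y mod 8)) (filter (block_choice (c (y div 8))) [0..<4])) else 0)"
    by (rule sum_list_upt_delta)
  finally show ?thesis .
qed

lemma even_overlaps_imp_gen_words_parity:
  assumes "set xs \<subseteq> {..<8*k}" "\<forall>g\<in>set (gen_words k). even (overlap g xs)"
  shows "\<exists>gl. set gl \<subseteq> set (gen_words k) \<and> (\<forall>y. odd (count_list xs y) \<longleftrightarrow> odd (count_list (concat gl) y))"
proof (intro exI conjI allI)
  define c where "c b t = count_list xs (8*b + t)" for b t
  show "set (chosen_gen_words k c) \<subseteq> set (gen_words k)" by (rule set_chosen_gen_words)
  fix y
  show "odd (count_list xs y) \<longleftrightarrow> odd (count_list (concat (chosen_gen_words k c)) y)"
  proof (cases "y div 8 < k")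
    case True
    define b where "b = y div 8"
    have even_block: "even (\<Sum>t\<in>set (block_words ! j). c b t)" if "j < 4" for j
    proof -
      have "gen_word b j \<in> set (gen_words k)" using True that unfolding set_gen_words b_def by blast
      hence "even (overlap (gen_word b j) xs)" using assms(2) by blast
      thus ?thesis using overlap_gen_word[OF that, of b xs] unfolding c_def by simp
    qed
    have parities: "even (c b 0 + c b 1 + c b 2 + c b 3)" "even (c b 0 + c b 1 + c b 4 + c b 5)"
      "even (c b 0 + c b 2 + c b 4 + c b 6)" "even (c b 0 + c b 1 + c b 2 + c b 3 + c b 4 + c b 5 + c b 6 + c b 7)"
      using even_block[of 0] even_block[of 1] even_block[of 2] even_block[of 3]
      by (simp_all add: block_words_def add.assoc)
    have "odd (count_list (concat (chosen_gen_words k c)) y) \<longleftrightarrow> odd (c b (y mod 8))"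
      unfolding count_chosen_gen_words using True block_choice_parity[OF parities, of "y mod 8"] by (simp add: b_def)
    also have "c b (y mod 8) = count_list xs y" unfolding c_def b_def by simp
    finally show ?thesis by simp
  next
    case False
    hence "y \<notin> set xs" using assms(1) by (auto simp: div_less_iff_less_mult mult.commute)
    thus ?thesis unfolding count_chosen_gen_words using False by simp
  qed
qed


definition neg_one_pow :: "nat \<Rightarrow> real" where "neg_one_pow n = (-1) ^ n"

lemma neg_one_pow_sq: "neg_one_pow n * neg_one_pow n = 1" unfolding neg_one_pow_def by (simp add: power_mult_distrib[symmetric])
lemma neg_one_pow_cases: "neg_one_pow n = 1 \<or> neg_one_pow n = -1" unfolding neg_one_pow_def by (cases "even n") auto
lemma neg_one_pow_add: "neg_one_pow (a + b) = neg_one_pow a * neg_one_pow b" unfolding neg_one_pow_def by (simp add: power_add)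
lemma neg_one_pow_Suc: "neg_one_pow (Suc n) = - neg_one_pow n" unfolding neg_one_pow_def by simp

definition anticomm_count :: "nat list \<Rightarrow> nat list \<Rightarrow> nat" where
  "anticomm_count xs ys = (\<Sum>y\<leftarrow>ys. length xs - count_list xs y)"

definition odd_letters :: "nat list \<Rightarrow> nat set" where "odd_letters xs = {i. odd (count_list xs i)}"

lemma odd_letters_Cons: "odd_letters (a # xs) = (odd_letters xs - {a}) \<union> ({a} - odd_letters xs)"
  unfolding odd_letters_def by auto

lemma sign_anticomm_count_even:
  assumes "even (length g)"
  shows "neg_one_pow (anticomm_count g ys) = neg_one_pow (overlap g ys)"
proof (induction ys)
  case Nil then show ?case by (simp add: anticomm_count_def overlap_def)
next
  case (Cons y ys)
  have cle: "count_list g y \<le> length g" by (induction g) auto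
  have "neg_one_pow (length g - count_list g y) = neg_one_pow (count_list g y)"
  proof -
    have "neg_one_pow (length g - count_list g y) * neg_one_pow (count_list g y) = neg_one_pow (length g)"
      using cle by (simp add: neg_one_pow_add[symmetric])
    also have "\<dots> = 1" using assms by (simp add: neg_one_pow_def)
    finally show ?thesis using neg_one_pow_cases[of "count_list g y"] by auto
  qed
  moreover have "anticomm_count g (y # ys) = (length g - count_list g y) + anticomm_count g ys" by (simp add: anticomm_count_def)
  moreover have "overlap g (y # ys) = count_list g y + overlap g ys" by (simp add: overlap_def)
  ultimately show ?case using Cons by (simp add: neg_one_pow_add)
qed

fun tri_num :: "nat \<Rightarrow> nat" where "tri_num 0 = 0" | "tri_num (Suc n) = tri_num n + n"

locale clifford_frame =
  fixes J :: "'z::euclidean_space \<Rightarrow> 'v::euclidean_space \<Rightarrow> 'v" and e :: "nat \<Rightarrow> 'z" and m :: nat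
  assumes clifford: "clifford_module J" and e_bij: "bij_betw e {..<m} Basis"
begin

definition Je :: "nat \<Rightarrow> 'v \<Rightarrow> 'v" where "Je i = J (e i)"

lemma J_linear: "linear (J z)" using clifford unfolding clifford_module_def by auto
lemma J_linear_z: "linear (\<lambda>z. J z v)" using clifford unfolding clifford_module_def by auto
lemma Je_linear: "linear (Je i)" unfolding Je_def by (rule J_linear)

lemma J_sq: "J z (J z v) = - (z \<bullet> z) *\<^sub>R v" using clifford unfolding clifford_module_def by auto
lemma J_skew: "(J z u) \<bullet> v = - (u \<bullet> (J z v))" using clifford unfolding clifford_module_def by auto

lemma J_add_z: "J (a + b) v = J a v + J b v"
  using linear_add[OF J_linear_z[of v]] by simp
lemma J_scale_z: "J (c *\<^sub>R a) v = c *\<^sub>R J a v"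
  using linear_scale[OF J_linear_z[of v]] by simp
lemma J_add: "J z (a + b) = J z a + J z b" using linear_add[OF J_linear] by simp
lemma J_scale: "J z (c *\<^sub>R a) = c *\<^sub>R J z a" using linear_scale[OF J_linear] by simp
lemma J_neg: "J z (- a) = - J z a" using linear_neg[OF J_linear] by simp
lemma J_zero: "J z 0 = 0" using linear_0[OF J_linear] by simp

lemma e_in: "i < m \<Longrightarrow> e i \<in> Basis" using e_bij bij_betw_apply by fastforce
lemma e_inj: "i < m \<Longrightarrow> j < m \<Longrightarrow> e i = e j \<Longrightarrow> i = j"
  using e_bij unfolding bij_betw_def inj_on_def by auto

lemma Je_sq: "i < m \<Longrightarrow> Je i (Je i v) = - v"
  unfolding Je_def using J_sq[of "e i" v] e_in[of i] by simp

lemma Je_anti: assumes "i < m" "j < m" "i \<noteq> j"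
  shows "Je i (Je j v) = - Je j (Je i v)"
proof -
  have bi: "e i \<in> Basis" and bj: "e j \<in> Basis" using assms e_in by auto
  have ne: "e i \<noteq> e j" using assms e_inj by blast
  have ij: "e i \<bullet> e j = 0" using bi bj ne by (simp add: inner_not_same_Basis)
  have "J (e i + e j) (J (e i + e j) v) = - ((e i + e j) \<bullet> (e i + e j)) *\<^sub>R v" by (rule J_sq)
  also have "(e i + e j) \<bullet> (e i + e j) = 2" using bi bj ij
    by (simp add: inner_add_left inner_add_right inner_commute)
  finally have "J (e i + e j) (J (e i + e j) v) = - 2 *\<^sub>R v" .
  moreover have "J (e i + e j) (J (e i + e j) v) = Je i (Je i v) + Je i (Je j v) + Je j (Je i v) + Je j (Je j v)"
    unfolding Je_def by (simp add: J_add_z J_add algebra_simps)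
  ultimately have "Je i (Je j v) + Je j (Je i v) = 0"
    using Je_sq[OF assms(1), of v] Je_sq[OF assms(2), of v] by (simp add: algebra_simps scaleR_2)
  thus ?thesis by (simp add: eq_neg_iff_add_eq_0)
qed

lemma Je_skew: "(Je i u) \<bullet> v = - (u \<bullet> Je i v)" unfolding Je_def by (rule J_skew)

lemma Je_norm: assumes "i < m" shows "Je i u \<bullet> Je i v = u \<bullet> v"
  using Je_skew[of i u "Je i v"] Je_sq[OF assms] by simp

lemma Je_add: "Je i (a + b) = Je i a + Je i b" unfolding Je_def by (rule J_add)
lemma Je_scale: "Je i (c *\<^sub>R a) = c *\<^sub>R Je i a" unfolding Je_def by (rule J_scale)
lemma Je_neg: "Je i (- a) = - Je i a" unfolding Je_def by (rule J_neg)
lemma Je_zero: "Je i 0 = 0" unfolding Je_def by (rule J_zero)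

lemma J_expand: "J z v = (\<Sum>i<m. (z \<bullet> e i) *\<^sub>R Je i v)"
proof -
  have "z = (\<Sum>b\<in>Basis. (z \<bullet> b) *\<^sub>R b)" by (simp add: euclidean_representation)
  also have "\<dots> = (\<Sum>i<m. (z \<bullet> e i) *\<^sub>R e i)"
    using sum.reindex_bij_betw[OF e_bij, of "\<lambda>b. (z \<bullet> b) *\<^sub>R b"] by simp
  finally have zz: "z = (\<Sum>i<m. (z \<bullet> e i) *\<^sub>R e i)" .
  have "J z v = J (\<Sum>i<m. (z \<bullet> e i) *\<^sub>R e i) v" using zz by simp
  also have "\<dots> = (\<Sum>i<m. J ((z \<bullet> e i) *\<^sub>R e i) v)"
    using linear_sum[OF J_linear_z[of v]] by simp
  also have "\<dots> = (\<Sum>i<m. (z \<bullet> e i) *\<^sub>R Je i v)" by (simp add: J_scale_z Je_def)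
  finally show ?thesis .
qed

lemma hbracket_zero_iff: "hbracket J u v = 0 \<longleftrightarrow> (\<forall>i<m. Je i u \<bullet> v = 0)"
proof
  assume h: "hbracket J u v = 0"
  show "\<forall>i<m. Je i u \<bullet> v = 0"
  proof (intro allI impI)
    fix i assume "i < m"
    hence b: "e i \<in> Basis" by (rule e_in)
    have "0 = hbracket J u v \<bullet> e i" using h by simp
    also have "\<dots> = (J (e i) u \<bullet> v)" unfolding hbracket_def using b
      by (simp add: inner_sum_left inner_Basis if_distrib cong: if_cong)
    finally show "Je i u \<bullet> v = 0" unfolding Je_def by simp
  qed
next
  assume h: "\<forall>i<m. Je i u \<bullet> v = 0"
  have "\<forall>b\<in>Basis. J b u \<bullet> v = 0"
  proof
    fix b :: 'z assume "b \<in> Basis"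
    then obtain i where "i < m" "b = e i" using e_bij unfolding bij_betw_def by auto
    thus "J b u \<bullet> v = 0" using h unfolding Je_def by auto
  qed
  thus "hbracket J u v = 0" unfolding hbracket_def by simp
qed

primrec Jw :: "nat list \<Rightarrow> 'v \<Rightarrow> 'v" where
  "Jw [] v = v"
| "Jw (i # xs) v = Je i (Jw xs v)"

lemma Jw_append: "Jw (xs @ ys) v = Jw xs (Jw ys v)" by (induction xs) auto

lemma Jw_linear: "linear (Jw xs)"
proof (induction xs)
  case Nil then show ?case by (simp add: linear_id[unfolded id_def])
next
  case (Cons i xs)
  have "Jw (i # xs) = Je i \<circ> Jw xs" by auto
  thus ?case using linear_compose[OF Cons Je_linear[of i]] by (simp add: comp_def)
qed

lemma Jw_add: "Jw xs (a + b) = Jw xs a + Jw xs b" using linear_add[OF Jw_linear] by simp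
lemma Jw_scale: "Jw xs (c *\<^sub>R a) = c *\<^sub>R Jw xs a" using linear_scale[OF Jw_linear] by simp
lemma Jw_neg: "Jw xs (- a) = - Jw xs a" using linear_neg[OF Jw_linear] by simp
lemma Jw_zero: "Jw xs 0 = 0" using linear_0[OF Jw_linear] by simp

lemma Jw_skew: "(Jw xs u) \<bullet> v = (-1) ^ length xs * (u \<bullet> Jw (rev xs) v)"
proof (induction xs arbitrary: v)
  case Nil then show ?case by simp
next
  case (Cons i xs)
  have "Jw (i # xs) u \<bullet> v = - (Jw xs u \<bullet> Je i v)" by (simp add: Je_skew)
  also have "\<dots> = - ((-1) ^ length xs * (u \<bullet> Jw (rev xs) (Je i v)))" using Cons by simp
  also have "Jw (rev xs) (Je i v) = Jw (rev (i # xs)) v" by (simp add: Jw_append)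
  finally show ?case by simp
qed

lemma Jw_norm: "set xs \<subseteq> {..<m} \<Longrightarrow> Jw xs u \<bullet> Jw xs v = u \<bullet> v"
  by (induction xs) (auto simp: Je_norm)

lemma Je_Jw_comm:
  assumes "i < m" "set xs \<subseteq> {..<m}"
  shows "Je i (Jw xs v) = neg_one_pow (length xs - count_list xs i) *\<^sub>R Jw xs (Je i v)"
  using assms(2)
proof (induction xs arbitrary: v)
  case Nil then show ?case by (simp add: neg_one_pow_def)
next
  case (Cons j xs)
  have j: "j < m" and xs: "set xs \<subseteq> {..<m}" using Cons.prems by auto
  have cle: "count_list xs i \<le> length xs" by (induction xs) auto
  show ?case
  proof (cases "i = j")
    case True
    have "Je i (Jw (j # xs) v) = Je j (Je i (Jw xs v))" using True by simp
    also have "\<dots> = Je j (neg_one_pow (length xs - count_list xs i) *\<^sub>R Jw xs (Je i v))" using Cons.IH[OF xs] by simp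
    also have "\<dots> = neg_one_pow (length (j#xs) - count_list (j#xs) i) *\<^sub>R Jw (j#xs) (Je i v)"
      using True cle by (simp add: Je_scale)
    finally show ?thesis .
  next
    case False
    have "Je i (Jw (j # xs) v) = - Je j (Je i (Jw xs v))" using Je_anti[OF assms(1) j False] by simp
    also have "\<dots> = - Je j (neg_one_pow (length xs - count_list xs i) *\<^sub>R Jw xs (Je i v))" using Cons.IH[OF xs] by simp
    also have "\<dots> = neg_one_pow (length (j#xs) - count_list (j#xs) i) *\<^sub>R Jw (j#xs) (Je i v)"
      using False cle by (simp add: Je_scale Suc_diff_le neg_one_pow_Suc)
    finally show ?thesis .
  qed
qed

lemma Jw_Je_comm:
  assumes "i < m" "set xs \<subseteq> {..<m}"
  shows "Jw xs (Je i v) = neg_one_pow (length xs - count_list xs i) *\<^sub>R Je i (Jw xs v)"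
  using Je_Jw_comm[OF assms, of v] neg_one_pow_sq[of "length xs - count_list xs i"]
  by (simp add: mult.assoc[symmetric])

lemma Jw_Jw_comm:
  assumes "set xs \<subseteq> {..<m}" "set ys \<subseteq> {..<m}"
  shows "Jw xs (Jw ys v) = neg_one_pow (anticomm_count xs ys) *\<^sub>R Jw ys (Jw xs v)"
  using assms(2)
proof (induction ys arbitrary: v)
  case Nil then show ?case by (simp add: anticomm_count_def neg_one_pow_def)
next
  case (Cons y ys)
  have y: "y < m" and ys: "set ys \<subseteq> {..<m}" using Cons.prems by auto
  have "Jw xs (Jw (y # ys) v) = Jw xs (Je y (Jw ys v))" by simp
  also have "\<dots> = neg_one_pow (length xs - count_list xs y) *\<^sub>R Je y (Jw xs (Jw ys v))"
    by (rule Jw_Je_comm[OF y assms(1)])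
  also have "\<dots> = neg_one_pow (length xs - count_list xs y) *\<^sub>R Je y (neg_one_pow (anticomm_count xs ys) *\<^sub>R Jw ys (Jw xs v))"
    using Cons.IH[OF ys] by simp
  also have "\<dots> = neg_one_pow (anticomm_count xs (y # ys)) *\<^sub>R Jw (y # ys) (Jw xs v)"
    by (simp add: Je_scale anticomm_count_def neg_one_pow_add mult.commute)
  finally show ?case .
qed

lemma Je_Jw_sorted:
  assumes "sorted_wrt (<) L" "set L \<subseteq> {..<m}" "a < m"
  shows "\<exists>L' \<sigma>. sorted_wrt (<) L' \<and> set L' = (set L - {a}) \<union> ({a} - set L) \<and> (\<sigma> = 1 \<or> \<sigma> = -1)
              \<and> (\<forall>v. Je a (Jw L v) = \<sigma> *\<^sub>R Jw L' v)"
  using assms(1,2)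
proof (induction L)
  case Nil
  show ?case by (rule exI[of _ "[a]"], rule exI[of _ 1]) auto
next
  case (Cons b L)
  have b: "b < m" and L: "set L \<subseteq> {..<m}" and sL: "sorted_wrt (<) L" and bl: "\<forall>x\<in>set L. b < x"
    using Cons.prems by auto
  show ?case
  proof (cases "a < b")
    case True
    show ?thesis
      apply (rule exI[of _ "a # b # L"], rule exI[of _ 1])
      using True Cons.prems bl by auto
  next
    case False
    show ?thesis
    proof (cases "a = b")
      case True
      show ?thesis
        apply (rule exI[of _ L], rule exI[of _ "-1"])
        using True Cons.prems bl Je_sq[OF b] by auto
    next
      case False2: False
      hence ab: "b < a" using False by auto
      obtain L' \<sigma> where L': "sorted_wrt (<) L'" "set L' = (set L - {a}) \<union> ({a} - set L)" "\<sigma> = 1 \<or> \<sigma> = -1"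
        "\<forall>v. Je a (Jw L v) = \<sigma> *\<^sub>R Jw L' v" using Cons.IH[OF sL L] by blast
      show ?thesis
      proof (rule exI[of _ "b # L'"], rule exI[of _ "-\<sigma>"], intro conjI allI)
        show "sorted_wrt (<) (b # L')" using L'(1,2) bl ab by auto
        show "set (b # L') = (set (b # L) - {a}) \<union> ({a} - set (b # L))" using L'(2) ab by auto
        show "- \<sigma> = 1 \<or> - \<sigma> = -1" using L'(3) by auto
        fix v
        have "Je a (Jw (b # L) v) = - Je b (Je a (Jw L v))" using Je_anti[OF assms(3) b False2] by simp
        also have "\<dots> = - \<sigma> *\<^sub>R Jw (b # L') v" using L'(4) by (simp add: Je_scale)
        finally show "Je a (Jw (b # L) v) = - \<sigma> *\<^sub>R Jw (b # L') v" .
      qed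
    qed
  qed
qed

lemma Jw_sorted_form:
  assumes "set xs \<subseteq> {..<m}"
  shows "\<exists>L \<sigma>. sorted_wrt (<) L \<and> set L = odd_letters xs \<and> (\<sigma> = 1 \<or> \<sigma> = -1) \<and> (\<forall>v. Jw xs v = \<sigma> *\<^sub>R Jw L v)"
  using assms
proof (induction xs)
  case Nil
  show ?case by (rule exI[of _ "[]"], rule exI[of _ 1]) (auto simp: odd_letters_def)
next
  case (Cons a xs)
  have a: "a < m" and xs: "set xs \<subseteq> {..<m}" using Cons.prems by auto
  obtain L \<sigma> where L: "sorted_wrt (<) L" "set L = odd_letters xs" "\<sigma> = 1 \<or> \<sigma> = -1" "\<forall>v. Jw xs v = \<sigma> *\<^sub>R Jw L v"
    using Cons.IH[OF xs] by blast
  have Lm: "set L \<subseteq> {..<m}" using L(2) xs unfolding odd_letters_def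
    by auto (metis count_notin even_zero lessThan_iff subsetD)
  obtain L' \<tau> where L': "sorted_wrt (<) L'" "set L' = (set L - {a}) \<union> ({a} - set L)" "\<tau> = 1 \<or> \<tau> = -1"
        "\<forall>v. Je a (Jw L v) = \<tau> *\<^sub>R Jw L' v" using Je_Jw_sorted[OF L(1) Lm a] by blast
  show ?case
  proof (rule exI[of _ L'], rule exI[of _ "\<sigma> * \<tau>"], intro conjI allI)
    show "sorted_wrt (<) L'" by fact
    show "set L' = odd_letters (a # xs)" using L'(2) L(2) by (simp add: odd_letters_Cons)
    show "\<sigma> * \<tau> = 1 \<or> \<sigma> * \<tau> = -1" using L(3) L'(3) by auto
    fix v
    show "Jw (a # xs) v = (\<sigma> * \<tau>) *\<^sub>R Jw L' v" using L(4) L'(4) by (simp add: Je_scale)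
  qed
qed

lemma Jw_same_odd_letters:
  assumes "set xs \<subseteq> {..<m}" "set ys \<subseteq> {..<m}" "odd_letters xs = odd_letters ys"
  shows "\<exists>\<sigma>. (\<sigma> = 1 \<or> \<sigma> = -1) \<and> (\<forall>v. Jw xs v = \<sigma> *\<^sub>R Jw ys v)"
proof -
  obtain L \<sigma> where L: "sorted_wrt (<) L" "set L = odd_letters xs" "\<sigma> = 1 \<or> \<sigma> = -1" "\<forall>v. Jw xs v = \<sigma> *\<^sub>R Jw L v"
    using Jw_sorted_form[OF assms(1)] by blast
  obtain L' \<tau> where L': "sorted_wrt (<) L'" "set L' = odd_letters ys" "\<tau> = 1 \<or> \<tau> = -1" "\<forall>v. Jw ys v = \<tau> *\<^sub>R Jw L' v"
    using Jw_sorted_form[OF assms(2)] by blast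
  have "L = L'" using strict_sorted_equal[OF L(1) L'(1)] L(2) L'(2) assms(3) by simp
  show ?thesis
  proof (rule exI[of _ "\<sigma> * \<tau>"], intro conjI allI)
    show "\<sigma> * \<tau> = 1 \<or> \<sigma> * \<tau> = -1" using L(3) L'(3) by auto
    fix v
    have "Jw ys v = \<tau> *\<^sub>R Jw L v" using L'(4) \<open>L = L'\<close> by simp
    hence "Jw L v = \<tau> *\<^sub>R Jw ys v" using L'(3) by auto
    thus "Jw xs v = (\<sigma> * \<tau>) *\<^sub>R Jw ys v" using L(4) by simp
  qed
qed

end

section \<open>The joint fixed space of the block words\<close>

locale clifford_frame_8k = clifford_frame J e m for J :: "'z::euclidean_space \<Rightarrow> 'v::euclidean_space \<Rightarrow> 'v" and e m +
  fixes k :: nat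
  assumes m_eq: "m = 8 * k"
begin

abbreviation gws :: "nat list list" where "gws \<equiv> gen_words k"

definition E :: "'v set" where "E = {v. \<forall>g\<in>set gws. Jw g v = v}"

lemma gen_word_props: assumes "g \<in> set gws"
  shows "set g \<subseteq> {..<m}" "distinct g" "length g = 4 \<or> length g = 8"
  using gen_words_shape[OF assms] m_eq by auto

lemma Jw_gen_commute_sign:
  assumes "g \<in> set gws" "set ys \<subseteq> {..<m}"
  shows "Jw g (Jw ys v) = neg_one_pow (overlap g ys) *\<^sub>R Jw ys (Jw g v)"
proof -
  have "even (length g)" using gen_word_props(3)[OF assms(1)] by auto
  thus ?thesis using Jw_Jw_comm[OF gen_word_props(1)[OF assms(1)] assms(2)] sign_anticomm_count_even by simp
qed

lemma Jw_rev:
  assumes "distinct xs" "set xs \<subseteq> {..<m}"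
  shows "Jw (rev xs) v = neg_one_pow (tri_num (length xs)) *\<^sub>R Jw xs v"
  using assms
proof (induction xs arbitrary: v)
  case Nil then show ?case by (simp add: neg_one_pow_def)
next
  case (Cons a xs)
  have a: "a < m" "a \<notin> set xs" and xs: "distinct xs" "set xs \<subseteq> {..<m}" using Cons.prems by auto
  have "Jw (rev (a # xs)) v = Jw (rev xs) (Je a v)" by (simp add: Jw_append)
  also have "\<dots> = neg_one_pow (length (rev xs) - count_list (rev xs) a) *\<^sub>R Je a (Jw (rev xs) v)"
    by (rule Jw_Je_comm) (use a xs in auto)
  also have "count_list (rev xs) a = 0" using a by simp
  also have "Jw (rev xs) v = neg_one_pow (tri_num (length xs)) *\<^sub>R Jw xs v" using Cons.IH[OF xs] .
  finally show ?case by (simp add: Je_scale neg_one_pow_add[symmetric] add.commute)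
qed

lemma Jw_gen_symmetric: assumes "g \<in> set gws" shows "Jw g u \<bullet> v = u \<bullet> Jw g v"
proof -
  have l: "length g = 4 \<or> length g = 8" using gen_word_props(3)[OF assms] .
  have t: "neg_one_pow (tri_num (length g)) = 1" using l by (auto simp: neg_one_pow_def numeral_eq_Suc)
  have "Jw g u \<bullet> v = (-1) ^ length g * (u \<bullet> Jw (rev g) v)" by (rule Jw_skew)
  also have "Jw (rev g) v = Jw g v" using Jw_rev[OF gen_word_props(2,1)[OF assms]] t by simp
  finally show ?thesis using l by auto
qed


lemma Jw_gen_involutive: assumes "g \<in> set gws" shows "Jw g (Jw g v) = v"
proof (rule vector_eq_rdot[THEN iffD1], rule allI)
  fix w
  show "Jw g (Jw g v) \<bullet> w = v \<bullet> w"
    using Jw_gen_symmetric[OF assms, of "Jw g v" "Jw g w"] Jw_norm[OF gen_word_props(1)[OF assms]] Jw_gen_symmetric[OF assms]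
    by (metis)
qed

lemma Jw_gens_commute: assumes "g \<in> set gws" "h \<in> set gws" shows "Jw g (Jw h v) = Jw h (Jw g v)"
proof -
  have "even (overlap g h)" using gen_words_overlap_even assms by blast
  hence "neg_one_pow (overlap g h) = 1" by (simp add: neg_one_pow_def)
  thus ?thesis using Jw_gen_commute_sign[OF assms(1) gen_word_props(1)[OF assms(2)]] by simp
qed

lemma subspace_E: "subspace E"
  unfolding subspace_def E_def by (auto simp: Jw_add Jw_scale Jw_zero)

lemma Jw_concat_gens_E: "set gl \<subseteq> set gws \<Longrightarrow> x \<in> E \<Longrightarrow> Jw (concat gl) x = x"
  by (induction gl) (auto simp: Jw_append E_def)

text \<open>Up to sign, \<open>J\<^sub>x\<^sub>s\<close> only depends on the letters occurring an odd number of times in \<open>xs\<close>, and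
  these are the odd letters of a concatenation of generator words, which fixes \<open>E\<close>.\<close>

lemma Jw_even_overlaps_on_E:
  assumes "set xs \<subseteq> {..<m}" "\<forall>g\<in>set gws. even (overlap g xs)"
  shows "\<exists>\<sigma>. (\<sigma> = 1 \<or> \<sigma> = -1) \<and> (\<forall>x\<in>E. Jw xs x = \<sigma> *\<^sub>R x)"
proof -
  obtain gl where gl: "set gl \<subseteq> set gws" "\<forall>y. odd (count_list xs y) \<longleftrightarrow> odd (count_list (concat gl) y)"
    using even_overlaps_imp_gen_words_parity[of xs k] assms m_eq by auto
  have cgl: "set (concat gl) \<subseteq> {..<m}" using gl(1) gen_word_props(1) by auto
  have "odd_letters xs = odd_letters (concat gl)" using gl(2) unfolding odd_letters_def by auto
  then obtain \<sigma> where s: "\<sigma> = 1 \<or> \<sigma> = -1" "\<forall>v. Jw xs v = \<sigma> *\<^sub>R Jw (concat gl) v"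
    using Jw_same_odd_letters[OF assms(1) cgl] by blast
  show ?thesis using s Jw_concat_gens_E[OF gl(1)] by auto
qed

lemma Jw_odd_overlap_orthogonal_E:
  assumes "set xs \<subseteq> {..<m}" "g \<in> set gws" "odd (overlap g xs)" "x \<in> E" "y \<in> E"
  shows "Jw xs x \<bullet> y = 0"
proof -
  have "neg_one_pow (overlap g xs) = -1" using assms(3) by (simp add: neg_one_pow_def)
  hence "Jw g (Jw xs x) = - Jw xs x" using Jw_gen_commute_sign[OF assms(2,1), of x] assms(4,2)
    by (simp add: E_def)
  moreover have "Jw xs x \<bullet> y = Jw xs x \<bullet> Jw g y" using assms(5,2) by (simp add: E_def)
  ultimately have "Jw xs x \<bullet> y = - (Jw xs x \<bullet> y)" using Jw_gen_symmetric[OF assms(2)] by (metis inner_minus_left)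
  thus ?thesis by simp
qed

lemma Jw_odd_length_orthogonal_E:
  assumes "set xs \<subseteq> {..<m}" "odd (length xs)" "x \<in> E" "y \<in> E"
  shows "Jw xs x \<bullet> y = 0"
proof -
  obtain g where "g \<in> set gws" "odd (overlap g xs)" using odd_length_imp_odd_overlap[of xs k] assms m_eq by auto
  thus ?thesis using Jw_odd_overlap_orthogonal_E assms by blast
qed

lemma Jw_E_inner_scalar:
  assumes "set xs \<subseteq> {..<m}"
  shows "\<exists>\<kappa>. \<forall>x\<in>E. \<forall>y\<in>E. Jw xs x \<bullet> y = \<kappa> * (x \<bullet> y)"
proof (cases "\<forall>g\<in>set gws. even (overlap g xs)")
  case True
  then obtain \<sigma> where "\<forall>x\<in>E. Jw xs x = \<sigma> *\<^sub>R x" using Jw_even_overlaps_on_E[OF assms] by blast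
  thus ?thesis by auto
next
  case False
  then obtain g where "g \<in> set gws" "odd (overlap g xs)" by auto
  thus ?thesis using Jw_odd_overlap_orthogonal_E[OF assms] by (intro exI[of _ 0]) auto
qed

lemma Jw_Jw_E_inner_scalar:
  assumes "set xs \<subseteq> {..<m}" "set ys \<subseteq> {..<m}"
  shows "\<exists>\<kappa>. \<forall>x\<in>E. \<forall>y\<in>E. Jw xs x \<bullet> Jw ys y = \<kappa> * (x \<bullet> y)"
proof -
  have "set (rev ys @ xs) \<subseteq> {..<m}" using assms by auto
  then obtain \<kappa> where k: "\<forall>x\<in>E. \<forall>y\<in>E. Jw (rev ys @ xs) x \<bullet> y = \<kappa> * (x \<bullet> y)" using Jw_E_inner_scalar by blast
  have "Jw xs x \<bullet> Jw ys y = ((-1) ^ length ys * \<kappa>) * (x \<bullet> y)" if "x \<in> E" "y \<in> E" for x y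
  proof -
    have "Jw xs x \<bullet> Jw ys y = Jw ys y \<bullet> Jw xs x" by (simp add: inner_commute)
    also have "\<dots> = (-1) ^ length ys * (y \<bullet> Jw (rev ys) (Jw xs x))" by (rule Jw_skew)
    also have "y \<bullet> Jw (rev ys) (Jw xs x) = Jw (rev ys @ xs) x \<bullet> y" by (simp add: Jw_append inner_commute)
    finally show ?thesis using k that by simp
  qed
  thus ?thesis by blast
qed

primrec avg_proj :: "nat list list \<Rightarrow> 'v \<Rightarrow> 'v" where
  "avg_proj [] v = v"
| "avg_proj (g # gl) v = (1/2) *\<^sub>R (avg_proj gl v + Jw g (avg_proj gl v))"

definition proj_E :: "'v \<Rightarrow> 'v" where "proj_E = avg_proj gws"

lemma avg_proj_linear: "linear (avg_proj gl)"
proof (induction gl)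
  case Nil then show ?case by (simp add: linear_id[unfolded id_def])
next
  case (Cons g gl)
  have "linear (\<lambda>v. avg_proj gl v + Jw g (avg_proj gl v))"
    using linear_compose[OF Cons Jw_linear[of g]] Cons by (intro linear_compose_add) (auto simp: comp_def)
  hence "linear (\<lambda>v. (1/2) *\<^sub>R (avg_proj gl v + Jw g (avg_proj gl v)))" by (intro linear_compose_scale_right)
  thus ?case by simp
qed

lemma avg_proj_comm: "set gl \<subseteq> set gws \<Longrightarrow> h \<in> set gws \<Longrightarrow> Jw h (avg_proj gl v) = avg_proj gl (Jw h v)"
  by (induction gl) (auto simp: Jw_add Jw_scale Jw_gens_commute)

lemma avg_proj_fix: "set gl \<subseteq> set gws \<Longrightarrow> g \<in> set gl \<Longrightarrow> Jw g (avg_proj gl v) = avg_proj gl v"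
proof (induction gl)
  case Nil then show ?case by simp
next
  case (Cons g' gl)
  show ?case
  proof (cases "g = g'")
    case True
    thus ?thesis using Cons.prems by (auto simp: Jw_add Jw_scale Jw_gen_involutive)
  next
    case False
    hence ggl: "g \<in> set gl" using Cons.prems by auto
    have g: "g \<in> set gws" "g' \<in> set gws" using Cons.prems by auto
    have "Jw g (Jw g' (avg_proj gl v)) = Jw g' (avg_proj gl v)"
      using Jw_gens_commute[OF g, of "avg_proj gl v"] Cons ggl by auto
    thus ?thesis using Cons ggl by (auto simp: Jw_add Jw_scale)
  qed
qed

lemma avg_proj_E: "set gl \<subseteq> set gws \<Longrightarrow> x \<in> E \<Longrightarrow> avg_proj gl x = x"
  by (induction gl) (auto simp: E_def)

lemma avg_proj_sym: "set gl \<subseteq> set gws \<Longrightarrow> avg_proj gl u \<bullet> v = u \<bullet> avg_proj gl v"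
proof (induction gl arbitrary: u v)
  case Nil then show ?case by simp
next
  case (Cons g gl)
  have g: "g \<in> set gws" and gl: "set gl \<subseteq> set gws" using Cons.prems by auto
  have "avg_proj (g # gl) u \<bullet> v = (1/2) * (avg_proj gl u \<bullet> v + Jw g (avg_proj gl u) \<bullet> v)"
    by (simp add: inner_add_left)
  also have "Jw g (avg_proj gl u) \<bullet> v = avg_proj gl u \<bullet> Jw g v" by (rule Jw_gen_symmetric[OF g])
  also have "avg_proj gl u \<bullet> Jw g v = u \<bullet> avg_proj gl (Jw g v)" using Cons.IH[OF gl] .
  also have "avg_proj gl u \<bullet> v = u \<bullet> avg_proj gl v" using Cons.IH[OF gl] .
  also have "avg_proj gl (Jw g v) = Jw g (avg_proj gl v)" using avg_proj_comm[OF gl g] by simp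
  finally show ?case by (simp add: inner_add_right)
qed

lemma proj_E_linear: "linear proj_E" unfolding proj_E_def by (rule avg_proj_linear)
lemma proj_E_in_E: "proj_E v \<in> E" unfolding proj_E_def E_def using avg_proj_fix[of gws] by auto
lemma proj_E_E: "x \<in> E \<Longrightarrow> proj_E x = x" unfolding proj_E_def by (rule avg_proj_E) auto
lemma proj_E_sym: "proj_E u \<bullet> v = u \<bullet> proj_E v" unfolding proj_E_def by (rule avg_proj_sym) auto

lemma avg_proj_closed:
  assumes "subspace M" "\<And>g x. g \<in> set gws \<Longrightarrow> x \<in> M \<Longrightarrow> Jw g x \<in> M" "set gl \<subseteq> set gws" "x \<in> M"
  shows "avg_proj gl x \<in> M"
  using assms(3,4)
proof (induction gl)
  case Nil then show ?case by simp
next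
  case (Cons g gl)
  hence "avg_proj gl x \<in> M" "Jw g (avg_proj gl x) \<in> M" using assms(2) by auto
  thus ?case using assms(1) by (simp add: subspace_add subspace_scale)
qed

lemma proj_E_closed:
  assumes "subspace M" "\<And>g x. g \<in> set gws \<Longrightarrow> x \<in> M \<Longrightarrow> Jw g x \<in> M" "x \<in> M"
  shows "proj_E x \<in> M"
  unfolding proj_E_def using avg_proj_closed[OF assms(1,2) _ assms(3)] by auto

lemma proj_E_Jw_E:
  assumes "set xs \<subseteq> {..<m}"
  shows "\<exists>\<kappa>. \<forall>x\<in>E. proj_E (Jw xs x) = \<kappa> *\<^sub>R x"
proof -
  obtain \<kappa> where k: "\<forall>x\<in>E. \<forall>y\<in>E. Jw xs x \<bullet> y = \<kappa> * (x \<bullet> y)" using Jw_E_inner_scalar[OF assms] by blast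
  have "proj_E (Jw xs x) = \<kappa> *\<^sub>R x" if x: "x \<in> E" for x
  proof -
    have in_E: "proj_E (Jw xs x) - \<kappa> *\<^sub>R x \<in> E" using subspace_E proj_E_in_E x
      by (simp add: subspace_diff subspace_scale)
    have "(proj_E (Jw xs x) - \<kappa> *\<^sub>R x) \<bullet> y = 0" if y: "y \<in> E" for y
    proof -
      have "proj_E (Jw xs x) \<bullet> y = Jw xs x \<bullet> proj_E y" by (rule proj_E_sym)
      also have "\<dots> = \<kappa> * (x \<bullet> y)" using proj_E_E[OF y] k x y by simp
      finally show ?thesis by (simp add: inner_diff_left)
    qed
    from this[OF in_E] show ?thesis by simp
  qed
  thus ?thesis by blast
qed

lemma proj_E_Jw_odd:
  assumes "set xs \<subseteq> {..<m}" "odd (length xs)" "x \<in> E"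
  shows "proj_E (Jw xs x) = 0"
proof -
  have "proj_E (Jw xs x) \<bullet> y = 0" if "y \<in> E" for y
    using proj_E_sym[of "Jw xs x" y] proj_E_E[OF that] Jw_odd_length_orthogonal_E[OF assms(1,2,3) that] by simp
  from this[OF proj_E_in_E[of "Jw xs x"]] show ?thesis by simp
qed

definition Je_invariant :: "'v set \<Rightarrow> bool" where
  "Je_invariant M \<longleftrightarrow> subspace M \<and> (\<forall>i<m. \<forall>x\<in>M. Je i x \<in> M)"

lemma Je_invariant_Jw: "Je_invariant M \<Longrightarrow> set xs \<subseteq> {..<m} \<Longrightarrow> x \<in> M \<Longrightarrow> Jw xs x \<in> M"
  by (induction xs) (auto simp: Je_invariant_def)

lemma dual_word_flips:
  assumes g: "g \<in> set gws"
  obtains fl where "set fl \<subseteq> {..<m}" "\<And>v. Jw g v = - v \<Longrightarrow> Jw g (Jw fl v) = Jw fl v"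
    "\<And>h v. h \<in> set gws \<Longrightarrow> h \<noteq> g \<Longrightarrow> Jw h v = v \<Longrightarrow> Jw h (Jw fl v) = Jw fl v"
proof -
  obtain fl where fl: "set fl \<subseteq> {..<m}" "\<forall>h\<in>set gws. odd (overlap h fl) \<longleftrightarrow> h = g"
    using dual_word_exists[OF g] m_eq by auto
  show ?thesis
  proof (rule that[OF fl(1)])
    fix v assume "Jw g v = - v"
    moreover have "neg_one_pow (overlap g fl) = -1" using fl(2) g by (simp add: neg_one_pow_def)
    ultimately show "Jw g (Jw fl v) = Jw fl v" using Jw_gen_commute_sign[OF g fl(1), of v] by (simp add: Jw_neg)
  next
    fix h v assume h: "h \<in> set gws" "h \<noteq> g" and hv: "Jw h v = v"
    have "even (overlap h fl)" using fl(2) h by blast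
    hence "neg_one_pow (overlap h fl) = 1" by (simp add: neg_one_pow_def)
    thus "Jw h (Jw fl v) = Jw fl v" using Jw_gen_commute_sign[OF h(1) fl(1), of v] hv by simp
  qed
qed

lemma Je_invariant_meets_fixed:
  assumes M: "Je_invariant M" and x: "x \<in> M" "x \<noteq> 0" and gl: "set gl \<subseteq> set gws"
  shows "\<exists>y\<in>M. y \<noteq> 0 \<and> (\<forall>g\<in>set gl. Jw g y = y)"
  using gl
proof (induction gl)
  case Nil then show ?case using x by auto
next
  case (Cons g gl)
  have g: "g \<in> set gws" and glg: "set gl \<subseteq> set gws" using Cons.prems by auto
  obtain y where y: "y \<in> M" "y \<noteq> 0" "\<forall>g\<in>set gl. Jw g y = y" using Cons.IH[OF glg] by blast
  have sM: "subspace M" using M by (simp add: Je_invariant_def)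
  have fixed_gl: "Jw g' (Jw w y) = Jw w y" if "g' \<in> set gl" "w \<in> set gws" for g' w
    using Jw_gens_commute[of g' w y] that glg y(3) by auto
  show ?case
  proof (cases "Jw g y = - y")
    case True
    obtain fl where fl: "set fl \<subseteq> {..<m}" "\<And>v. Jw g v = - v \<Longrightarrow> Jw g (Jw fl v) = Jw fl v"
      "\<And>h v. h \<in> set gws \<Longrightarrow> h \<noteq> g \<Longrightarrow> Jw h v = v \<Longrightarrow> Jw h (Jw fl v) = Jw fl v"
      using dual_word_flips[OF g] by blast
    have "Jw fl y \<bullet> Jw fl y = y \<bullet> y" using Jw_norm[OF fl(1)] by simp
    hence "Jw fl y \<noteq> 0" using y(2) by auto
    moreover have "g \<notin> set gl"
    proof
      assume "g \<in> set gl"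
      hence "y = - y" using True y(3) by simp
      hence "2 *\<^sub>R y = 0" by (simp add: scaleR_2 eq_neg_iff_add_eq_0)
      thus False using y(2) by simp
    qed
    ultimately show ?thesis
      using Je_invariant_Jw[OF M fl(1) y(1)] fl(2)[OF True] fl(3) y(3) glg
      by (intro bexI[of _ "Jw fl y"]) auto
  next
    case False
    have "y + Jw g y \<noteq> 0" using False by (simp add: add_eq_0_iff)
    moreover have "y + Jw g y \<in> M"
      using sM y(1) Je_invariant_Jw[OF M gen_word_props(1)[OF g] y(1)] by (simp add: subspace_add)
    moreover have "Jw g (y + Jw g y) = y + Jw g y" using g by (simp add: Jw_add Jw_gen_involutive)
    ultimately show ?thesis using y(3) fixed_gl[OF _ g] by (intro bexI[of _ "y + Jw g y"]) (auto simp: Jw_add)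
  qed
qed

lemma Je_invariant_meets_E:
  assumes "Je_invariant M" "x \<in> M" "x \<noteq> 0"
  shows "\<exists>y\<in>M. y \<noteq> 0 \<and> y \<in> E"
  using Je_invariant_meets_fixed[OF assms, of gws] unfolding E_def by auto

definition Jw_E_vectors :: "'v set" where "Jw_E_vectors = {Jw xs x | xs x. set xs \<subseteq> {..<m} \<and> x \<in> E}"

lemma E_subset_Jw_E_vectors: "E \<subseteq> Jw_E_vectors" unfolding Jw_E_vectors_def by (auto intro: exI[of _ "[]"])

lemma Je_span_closed:
  assumes "i < m" "\<And>x. x \<in> S \<Longrightarrow> Je i x \<in> span S" "y \<in> span S"
  shows "Je i y \<in> span S"
proof -
  have "Je i ` span S = span (Je i ` S)" using linear_span_image[OF Je_linear[of i]] by simp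
  moreover have "span (Je i ` S) \<subseteq> span S" using assms(2) by (simp add: image_subset_iff span_subspace_induct span_minimal)
  ultimately show ?thesis using assms(3) by blast
qed

lemma span_Jw_E_vectors: "span Jw_E_vectors = UNIV"
proof -
  have inv: "Je_invariant {z. \<forall>w\<in>span Jw_E_vectors. z \<bullet> w = 0}" (is "Je_invariant ?Mp")
  proof -
    have "subspace ?Mp" unfolding subspace_def by (auto simp: inner_add_left)
    moreover have "Je i z \<in> ?Mp" if "i < m" "z \<in> ?Mp" for i z
    proof -
      have "Je i w \<in> span Jw_E_vectors" if "w \<in> span Jw_E_vectors" for w
      proof (rule Je_span_closed[OF \<open>i < m\<close> _ that])
        fix x assume "x \<in> Jw_E_vectors"
        then obtain xs y where "x = Jw xs y" "set xs \<subseteq> {..<m}" "y \<in> E" unfolding Jw_E_vectors_def by blast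
        hence "Je i x \<in> Jw_E_vectors" unfolding Jw_E_vectors_def using \<open>i < m\<close> by (auto intro!: exI[of _ "i # xs"])
        thus "Je i x \<in> span Jw_E_vectors" by (rule span_base)
      qed
      thus ?thesis using that by (auto simp: Je_skew)
    qed
    ultimately show ?thesis unfolding Je_invariant_def by blast
  qed
  have "v \<in> span Jw_E_vectors" for v
  proof -
    obtain y z where yz: "y \<in> span Jw_E_vectors" "\<And>w. w \<in> span Jw_E_vectors \<Longrightarrow> orthogonal z w" "v = y + z"
      using orthogonal_subspace_decomp_exists by blast
    have zM: "z \<in> ?Mp" using yz(2) by (simp add: orthogonal_def)
    have "z = 0"
    proof (rule ccontr)
      assume "z \<noteq> 0"
      then obtain u where u: "u \<in> ?Mp" "u \<noteq> 0" "u \<in> E" using Je_invariant_meets_E[OF inv zM] by blast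
      have "u \<in> span Jw_E_vectors" using u(3) E_subset_Jw_E_vectors span_base by blast
      hence "u \<bullet> u = 0" using u(1) by blast
      thus False using u(2) by simp
    qed
    thus ?thesis using yz by simp
  qed
  thus ?thesis by auto
qed

text \<open>A list \<open>R\<close> of pairs \<open>(w, x)\<close> encodes the formal sum of the \<open>J\<^sub>w x\<close>; \<open>rep_sum T R\<close> evaluates it
  after applying \<open>T\<close> to the components \<open>x \<in> E\<close>.\<close>

definition valid_rep :: "(nat list \<times> 'v) list \<Rightarrow> bool" where
  "valid_rep R \<longleftrightarrow> (\<forall>(xs, x)\<in>set R. set xs \<subseteq> {..<m} \<and> x \<in> E)"

definition rep_sum :: "('v \<Rightarrow> 'v) \<Rightarrow> (nat list \<times> 'v) list \<Rightarrow> 'v" where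
  "rep_sum T R = sum_list (map (\<lambda>(xs, x). Jw xs (T x)) R)"

lemma rep_sum_append: "rep_sum T (R @ R') = rep_sum T R + rep_sum T R'" by (simp add: rep_sum_def)

lemma valid_rep_append: "valid_rep (R @ R') \<longleftrightarrow> valid_rep R \<and> valid_rep R'" by (auto simp: valid_rep_def)

lemma rep_exists: "\<exists>R. valid_rep R \<and> v = rep_sum id R"
proof -
  have "v \<in> span Jw_E_vectors" using span_Jw_E_vectors by simp
  thus ?thesis
  proof (induction rule: span_induct_alt)
    case base
    show ?case by (rule exI[of _ "[]"]) (simp add: valid_rep_def rep_sum_def)
  next
    case (step c x y)
    obtain xs z where x: "x = Jw xs z" "set xs \<subseteq> {..<m}" "z \<in> E" using step(1) unfolding Jw_E_vectors_def by blast
    obtain R where R: "valid_rep R" "y = rep_sum id R" using step(2) by blast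
    have "c *\<^sub>R z \<in> E" using subspace_E x(3) by (simp add: subspace_scale)
    thus ?case using R x
      by (intro exI[of _ "(xs, c *\<^sub>R z) # R"]) (auto simp: valid_rep_def rep_sum_def Jw_scale)
  qed
qed

lemma rep_sum_gram:
  assumes T: "\<forall>x\<in>E. T x \<in> E" "\<forall>x\<in>E. \<forall>y\<in>E. T x \<bullet> T y = x \<bullet> y"
    and R: "valid_rep R" "valid_rep R'"
  shows "rep_sum T R \<bullet> rep_sum T R' = rep_sum id R \<bullet> rep_sum id R'"
proof -
  have trm: "Jw xs (T x) \<bullet> Jw ys (T y) = Jw xs x \<bullet> Jw ys y"
    if A: "set xs \<subseteq> {..<m}" "x \<in> E" "set ys \<subseteq> {..<m}" "y \<in> E" for xs x ys y
  proof -
    obtain \<kappa> where k: "\<forall>x\<in>E. \<forall>y\<in>E. Jw xs x \<bullet> Jw ys y = \<kappa> * (x \<bullet> y)" using Jw_Jw_E_inner_scalar[OF A(1,3)] by blast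
    show ?thesis using k T A by simp
  qed
  have inner2: "\<forall>(ys, y)\<in>set R'. set ys \<subseteq> {..<m} \<and> y \<in> E \<Longrightarrow>
      Jw xs (T x) \<bullet> rep_sum T R' = Jw xs x \<bullet> rep_sum id R'"
    if "set xs \<subseteq> {..<m}" "x \<in> E" for xs x
    using that
  proof (induction R')
    case Nil then show ?case by (simp add: rep_sum_def)
  next
    case (Cons a R')
    obtain ys y where a: "a = (ys, y)" by (cases a)
    show ?case using Cons trm[of xs x ys y] by (auto simp: a rep_sum_def inner_add_right)
  qed
  show ?thesis using R(1)
  proof (induction R)
    case Nil then show ?case by (simp add: rep_sum_def)
  next
    case (Cons a R)
    obtain xs x where a: "a = (xs, x)" by (cases a)
    have v: "valid_rep R" "set xs \<subseteq> {..<m}" "x \<in> E" using Cons.prems by (auto simp: valid_rep_def a)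
    have "rep_sum T (a # R) = Jw xs (T x) + rep_sum T R" "rep_sum id (a # R) = Jw xs x + rep_sum id R"
      by (auto simp: rep_sum_def a)
    thus ?case using Cons.IH[OF v(1)] inner2[OF v(2,3)] R(2) unfolding valid_rep_def
      by (simp add: inner_add_left id_def)
  qed
qed

lemma rep_sum_welldef:
  assumes T: "\<forall>x\<in>E. T x \<in> E" "\<forall>x\<in>E. \<forall>y\<in>E. T x \<bullet> T y = x \<bullet> y"
    and R: "valid_rep R" "valid_rep R'" "rep_sum id R = rep_sum id R'"
  shows "rep_sum T R = rep_sum T R'"
proof -
  let ?a = "rep_sum T R" and ?b = "rep_sum T R'"
  have "(?a - ?b) \<bullet> (?a - ?b) = ?a \<bullet> ?a - 2 * (?a \<bullet> ?b) + ?b \<bullet> ?b"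
    by (simp add: inner_diff_left inner_diff_right inner_commute)
  also have "\<dots> = rep_sum id R \<bullet> rep_sum id R - 2 * (rep_sum id R \<bullet> rep_sum id R') + rep_sum id R' \<bullet> rep_sum id R'"
    using rep_sum_gram[OF T] R by simp
  also have "\<dots> = 0" using R(3) by simp
  finally show ?thesis by simp
qed

text \<open>Every vector is a sum of vectors \<open>J\<^sub>w x\<close> with \<open>x \<in> E\<close>, and the Gram matrix of such vectors only
  depends on inner products in \<open>E\<close> (\<open>Jw_Jw_E_inner_scalar\<close>); hence \<open>J\<^sub>w x \<mapsto> J\<^sub>w (T x)\<close> is well defined
  for an isometry \<open>T\<close> of \<open>E\<close> (\<open>rep_sum_welldef\<close>), whichever representation \<open>SOME\<close> picks.\<close>

definition equivariant_ext :: "('v \<Rightarrow> 'v) \<Rightarrow> 'v \<Rightarrow> 'v" where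
  "equivariant_ext T v = rep_sum T (SOME R. valid_rep R \<and> v = rep_sum id R)"

lemma equivariant_ext_rep_sum:
  assumes T: "\<forall>x\<in>E. T x \<in> E" "\<forall>x\<in>E. \<forall>y\<in>E. T x \<bullet> T y = x \<bullet> y" and R: "valid_rep R"
  shows "equivariant_ext T (rep_sum id R) = rep_sum T R"
proof -
  define R0 where "R0 = (SOME R0. valid_rep R0 \<and> rep_sum id R = rep_sum id R0)"
  have "valid_rep R0 \<and> rep_sum id R = rep_sum id R0" unfolding R0_def
    by (rule someI_ex) (use R in blast)
  thus ?thesis unfolding equivariant_ext_def R0_def[symmetric] using rep_sum_welldef[OF T R] by auto
qed

lemma rep_sum_Je: "Je i (rep_sum T R) = rep_sum T (map (\<lambda>(xs, x). (i # xs, x)) R)"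
  by (induction R) (auto simp: rep_sum_def Je_add Je_zero)

lemma rep_sum_scale: "linear T \<Longrightarrow> c *\<^sub>R rep_sum T R = rep_sum T (map (\<lambda>(xs, x). (xs, c *\<^sub>R x)) R)"
  by (induction R) (auto simp: rep_sum_def Jw_scale linear_scale scaleR_add_right)

lemma equivariant_ext_props:
  assumes T: "linear T" "\<forall>x\<in>E. T x \<in> E" "\<forall>x\<in>E. \<forall>y\<in>E. T x \<bullet> T y = x \<bullet> y"
  shows "linear (equivariant_ext T)" "\<And>u v. equivariant_ext T u \<bullet> equivariant_ext T v = u \<bullet> v"
    "\<And>i v. i < m \<Longrightarrow> equivariant_ext T (Je i v) = Je i (equivariant_ext T v)" "\<And>x. x \<in> E \<Longrightarrow> equivariant_ext T x = T x"
proof -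
  have rep: "\<exists>R. valid_rep R \<and> v = rep_sum id R" for v using rep_exists by blast
  have eq: "equivariant_ext T (rep_sum id R) = rep_sum T R" if "valid_rep R" for R using equivariant_ext_rep_sum[OF T(2,3) that] .
  show "linear (equivariant_ext T)"
  proof (rule linearI)
    fix u v
    obtain Ru Rv where "valid_rep Ru" "u = rep_sum id Ru" "valid_rep Rv" "v = rep_sum id Rv" using rep by metis
    thus "equivariant_ext T (u + v) = equivariant_ext T u + equivariant_ext T v"
      using eq[of "Ru @ Rv"] eq[of Ru] eq[of Rv] by (simp add: rep_sum_append valid_rep_append)
  next
    fix c :: real and v
    obtain R where R: "valid_rep R" "v = rep_sum id R" using rep by metis
    have vR: "valid_rep (map (\<lambda>(xs, x). (xs, c *\<^sub>R x)) R)" using R(1) subspace_E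
      by (auto simp: valid_rep_def subspace_scale)
    have "c *\<^sub>R v = rep_sum id (map (\<lambda>(xs, x). (xs, c *\<^sub>R x)) R)"
      using rep_sum_scale[of id c R] R(2) by (simp add: linear_id)
    thus "equivariant_ext T (c *\<^sub>R v) = c *\<^sub>R equivariant_ext T v" using eq[OF vR] eq[OF R(1)] R(2) rep_sum_scale[OF T(1)] by simp
  qed
  show "equivariant_ext T u \<bullet> equivariant_ext T v = u \<bullet> v" for u v
  proof -
    obtain Ru Rv where "valid_rep Ru" "u = rep_sum id Ru" "valid_rep Rv" "v = rep_sum id Rv" using rep by metis
    thus ?thesis using eq rep_sum_gram[OF T(2,3)] by simp
  qed
  show "equivariant_ext T (Je i v) = Je i (equivariant_ext T v)" if "i < m" for i v
  proof -
    obtain R where R: "valid_rep R" "v = rep_sum id R" using rep by metis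
    have vR: "valid_rep (map (\<lambda>(xs, x). (i # xs, x)) R)" using R(1) that unfolding valid_rep_def by fastforce
    show ?thesis using eq[OF vR] eq[OF R(1)] R(2) rep_sum_Je by simp
  qed
  show "equivariant_ext T x = T x" if "x \<in> E" for x
  proof -
    have "valid_rep [([], x)]" using that by (simp add: valid_rep_def)
    moreover have "rep_sum id [([], x)] = x" "rep_sum T [([], x)] = T x" by (simp_all add: rep_sum_def)
    ultimately show ?thesis using eq by metis
  qed
qed

definition commutes_J :: "('v \<Rightarrow> 'v) \<Rightarrow> bool" where
  "commutes_J \<xi> \<longleftrightarrow> (\<forall>i<m. \<forall>v. \<xi> (Je i v) = Je i (\<xi> v))"

lemma commutes_J_Jw: "commutes_J \<xi> \<Longrightarrow> set xs \<subseteq> {..<m} \<Longrightarrow> \<xi> (Jw xs v) = Jw xs (\<xi> v)"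
  by (induction xs) (auto simp: commutes_J_def)

lemma commutes_J_E: "commutes_J \<xi> \<Longrightarrow> x \<in> E \<Longrightarrow> \<xi> x \<in> E"
  unfolding E_def using commutes_J_Jw gen_word_props(1) by auto

lemma commutes_J_eq_on_E_imp_eq:
  assumes "linear \<xi>1" "linear \<xi>2" "commutes_J \<xi>1" "commutes_J \<xi>2" "\<And>x. x \<in> E \<Longrightarrow> \<xi>1 x = \<xi>2 x"
  shows "\<xi>1 = \<xi>2"
proof
  fix v
  obtain R where R: "valid_rep R" "v = rep_sum id R" using rep_exists by blast
  have "\<xi> (rep_sum id R) = rep_sum \<xi> R" if "linear \<xi>" "commutes_J \<xi>" "valid_rep R" for \<xi> R
    using that(3)
  proof (induction R)
    case Nil then show ?case by (simp add: rep_sum_def linear_0[OF that(1)])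
  next
    case (Cons a R)
    obtain xs x where a: "a = (xs, x)" by (cases a)
    have "valid_rep R" "set xs \<subseteq> {..<m}" using Cons.prems by (auto simp: valid_rep_def a)
    thus ?case using Cons.IH commutes_J_Jw[OF that(2)] linear_add[OF that(1)]
      by (simp add: rep_sum_def a)
  qed
  moreover have "rep_sum \<xi>1 R = rep_sum \<xi>2 R" using R(1) assms(5)
    by (induction R) (auto simp: rep_sum_def valid_rep_def)
  ultimately show "\<xi>1 v = \<xi>2 v" using R assms by simp
qed

section \<open>Lagrangian subspaces\<close>

lemma m_pos: "0 < m"
proof -
  have "card {..<m} = card (Basis :: 'z set)" using bij_betw_same_card[OF e_bij] .
  thus ?thesis by simp
qed

lemma Lag_iff_Je: "L \<in> Lag J \<longleftrightarrow> subspace L \<and> (\<forall>u\<in>L. \<forall>v\<in>L. \<forall>i<m. Je i u \<bullet> v = 0) \<and> 2 * dim L = DIM('v)"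
  unfolding Lag_def using hbracket_zero_iff by auto

lemma Je_inj: "i < m \<Longrightarrow> Je i x = Je i y \<Longrightarrow> x = y"
  by (metis Je_sq neg_equal_iff_equal)

lemma dim_plus_Je_image:
  assumes A: "subspace A" and i: "i < m" and iso: "\<forall>x\<in>A. \<forall>y\<in>A. Je i x \<bullet> y = 0"
  shows "dim {x + y | x y. x \<in> A \<and> y \<in> Je i ` A} = 2 * dim A"
proof -
  have sB: "subspace (Je i ` A)" using linear_subspace_image[OF Je_linear A] .
  have "A \<inter> Je i ` A \<subseteq> {0}"
  proof
    fix x assume "x \<in> A \<inter> Je i ` A"
    then obtain y where "x \<in> A" "y \<in> A" "x = Je i y" by auto
    hence "x \<bullet> x = 0" using iso by auto
    thus "x \<in> {0}" by simp
  qed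
  hence d0: "dim (A \<inter> Je i ` A) = 0" by simp
  have "inj_on (Je i) (span A)" using Je_inj[OF i] by (auto simp: inj_on_def)
  hence "dim (Je i ` A) = dim A" using dim_image_eq[OF Je_linear] by blast
  thus ?thesis using dim_sums_Int[OF A sB] d0 by simp
qed

lemma Je_isotropic_span:
  assumes "\<forall>a\<in>S. \<forall>b\<in>S. \<forall>i<m. Je i a \<bullet> b = 0"
  shows "\<forall>a\<in>span S. \<forall>b\<in>span S. \<forall>i<m. Je i a \<bullet> b = 0"
proof (intro ballI allI impI)
  fix a b i assume a: "a \<in> span S" and b: "b \<in> span S" and i: "i < m"
  have s1: "span S \<subseteq> {a. \<forall>b\<in>S. Je i a \<bullet> b = 0}"
    by (rule span_minimal) (use assms i in \<open>auto simp: subspace_def Je_add Je_scale Je_zero inner_add_left\<close>)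
  have "span S \<subseteq> {b. Je i a \<bullet> b = 0}"
    by (rule span_minimal) (use s1 a in \<open>auto simp: subspace_def inner_add_right\<close>)
  thus "Je i a \<bullet> b = 0" using b by auto
qed

lemma Jw_odd_total_orthogonal:
  assumes "set a \<subseteq> {..<m}" "set b \<subseteq> {..<m}" "x \<in> E" "y \<in> E" "odd (length a + length b)"
  shows "Jw a x \<bullet> Jw b y = 0"
proof -
  have "Jw a x \<bullet> Jw b y = Jw b y \<bullet> Jw a x" by (simp add: inner_commute)
  also have "\<dots> = (-1) ^ length b * (y \<bullet> Jw (rev b) (Jw a x))" by (rule Jw_skew)
  also have "y \<bullet> Jw (rev b) (Jw a x) = Jw (rev b @ a) x \<bullet> y" by (simp add: Jw_append inner_commute)
  also have "\<dots> = 0" by (rule Jw_odd_length_orthogonal_E) (use assms in auto)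
  finally show ?thesis by simp
qed

lemma Jw_orthogonal_E:
  assumes "set a \<subseteq> {..<m}" "set b \<subseteq> {..<m}" "x \<in> E" "y \<in> E" "x \<bullet> y = 0"
  shows "Jw a x \<bullet> Jw b y = 0"
proof -
  obtain \<kappa> where "\<forall>x\<in>E. \<forall>y\<in>E. Jw a x \<bullet> Jw b y = \<kappa> * (x \<bullet> y)" using Jw_Jw_E_inner_scalar[OF assms(1,2)] by blast
  thus ?thesis using assms by simp
qed

definition Lam_gens :: "'v set \<Rightarrow> 'v set" where
  "Lam_gens U = {Jw xs u | xs u. set xs \<subseteq> {..<m} \<and> even (length xs) \<and> u \<in> U} \<union>
          {Jw xs w | xs w. set xs \<subseteq> {..<m} \<and> odd (length xs) \<and> w \<in> E \<and> (\<forall>u\<in>U. w \<bullet> u = 0)}"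

definition Lam :: "'v set \<Rightarrow> 'v set" where "Lam U = span (Lam_gens U)"

lemma Lam_isotropic:
  assumes U: "U \<subseteq> E"
  shows "\<forall>a\<in>Lam U. \<forall>b\<in>Lam U. \<forall>i<m. Je i a \<bullet> b = 0"
  unfolding Lam_def
proof (rule Je_isotropic_span, intro ballI allI impI)
  fix a b i assume a: "a \<in> Lam_gens U" and b: "b \<in> Lam_gens U" and i: "i < m"
  from a obtain xs x where ax: "a = Jw xs x" "set xs \<subseteq> {..<m}" "x \<in> E"
    "(even (length xs) \<and> x \<in> U) \<or> (odd (length xs) \<and> (\<forall>u\<in>U. x \<bullet> u = 0))"
    unfolding Lam_gens_def using U by blast
  from b obtain ys y where bq: "b = Jw ys y" "set ys \<subseteq> {..<m}" "y \<in> E"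
    "(even (length ys) \<and> y \<in> U) \<or> (odd (length ys) \<and> (\<forall>u\<in>U. y \<bullet> u = 0))"
    unfolding Lam_gens_def using U by blast
  have Ja: "Je i a = Jw (i # xs) x" using ax by simp
  have xs': "set (i # xs) \<subseteq> {..<m}" using ax i by auto
  have "Jw (i # xs) x \<bullet> Jw ys y = 0"
    using ax(4) bq(4)
  proof (elim disjE conjE)
    assume "even (length xs)" "even (length ys)"
    thus ?thesis using Jw_odd_total_orthogonal[OF xs' bq(2) ax(3) bq(3)] by simp
  next
    assume "even (length xs)" "x \<in> U" "odd (length ys)" "\<forall>u\<in>U. y \<bullet> u = 0"
    thus ?thesis using Jw_orthogonal_E[OF xs' bq(2) ax(3) bq(3)] by (simp add: inner_commute)
  next
    assume "odd (length xs)" "\<forall>u\<in>U. x \<bullet> u = 0" "even (length ys)" "y \<in> U"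
    thus ?thesis using Jw_orthogonal_E[OF xs' bq(2) ax(3) bq(3)] by simp
  next
    assume "odd (length xs)" "odd (length ys)"
    thus ?thesis using Jw_odd_total_orthogonal[OF xs' bq(2) ax(3) bq(3)] by simp
  qed
  thus "Je i a \<bullet> b = 0" using Ja bq(1) by simp
qed

text \<open>Splitting \<open>x \<in> E\<close> along \<open>U\<close> and its orthogonal complement in \<open>E\<close>, every \<open>J\<^sub>w x\<close> is the sum of
  a generator of \<open>Lam U\<close> and the image under \<open>J\<^sub>0\<close> of another one.\<close>

lemma Lam_plus_Je0_Lam:
  assumes U: "subspace U" "U \<subseteq> E"
  shows "{x + y | x y. x \<in> Lam U \<and> y \<in> Je 0 ` Lam U} = UNIV"
proof -
  let ?S = "{x + y | x y. x \<in> Lam U \<and> y \<in> Je 0 ` Lam U}"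
  have sL: "subspace (Lam U)" unfolding Lam_def by simp
  have sS: "subspace ?S" by (rule subspace_sums[OF sL linear_subspace_image[OF Je_linear sL]])
  have Je0_flip: "Jw xs v = Je 0 (- Jw (0 # xs) v)" for xs v
    using Je_sq[OF m_pos, of "Jw xs v"] by (simp add: Je_neg)
  have "Jw_E_vectors \<subseteq> ?S"
  proof
    fix g assume "g \<in> Jw_E_vectors"
    then obtain xs x where g: "g = Jw xs x" "set xs \<subseteq> {..<m}" "x \<in> E" unfolding Jw_E_vectors_def by blast
    obtain u w where uw: "u \<in> span U" "\<And>z. z \<in> span U \<Longrightarrow> orthogonal w z" "x = u + w"
      using orthogonal_subspace_decomp_exists by blast
    have uU: "u \<in> U" using uw(1) U(1) span_eq_iff by blast
    have wE: "w \<in> E" using uw(3) uU U(2) g(3) subspace_E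
      by (metis add_diff_cancel_left' subsetD subspace_diff)
    have wperp: "\<forall>z\<in>U. w \<bullet> z = 0" using uw(2) span_base by (auto simp: orthogonal_def)
    have xs0: "set (0 # xs) \<subseteq> {..<m}" using g(2) m_pos by auto
    have gsum: "g = Jw xs u + Jw xs w" using g uw(3) by (simp add: Jw_add)
    show "g \<in> ?S"
    proof (cases "even (length xs)")
      case True
      have "Jw xs u \<in> Lam U" unfolding Lam_def Lam_gens_def using True g(2) uU by (intro span_base) blast
      moreover have "Jw (0 # xs) w \<in> Lam U" unfolding Lam_def Lam_gens_def using True xs0 wE wperp
        by (intro span_base UnI2 CollectI exI[of _ "0 # xs"] exI[of _ w]) auto
      hence "- Jw (0 # xs) w \<in> Lam U" using sL by (simp add: subspace_neg)
      ultimately show ?thesis unfolding gsum Je0_flip[of xs w] by (intro add_mem_sums imageI)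
    next
      case False
      have "Jw xs w \<in> Lam U" unfolding Lam_def Lam_gens_def using False g(2) wE wperp
        by (intro span_base UnI2 CollectI exI[of _ xs] exI[of _ w]) auto
      moreover have "Jw (0 # xs) u \<in> Lam U" unfolding Lam_def Lam_gens_def using False xs0 uU
        by (intro span_base UnI1 CollectI exI[of _ "0 # xs"] exI[of _ u]) auto
      hence "- Jw (0 # xs) u \<in> Lam U" using sL by (simp add: subspace_neg)
      ultimately show ?thesis unfolding gsum Je0_flip[of xs u] by (subst add.commute) (intro add_mem_sums imageI)
    qed
  qed
  hence "span Jw_E_vectors \<subseteq> ?S" using span_minimal sS by blast
  thus ?thesis using span_Jw_E_vectors by auto
qed

lemma Lam_Lag:
  assumes U: "subspace U" "U \<subseteq> E"
  shows "Lam U \<in> Lag J"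
proof -
  have sL: "subspace (Lam U)" unfolding Lam_def by simp
  have iso: "\<forall>a\<in>Lam U. \<forall>b\<in>Lam U. \<forall>i<m. Je i a \<bullet> b = 0" using Lam_isotropic[OF U(2)] .
  have "dim {x + y | x y. x \<in> Lam U \<and> y \<in> Je 0 ` Lam U} = 2 * dim (Lam U)"
    using dim_plus_Je_image[OF sL m_pos] iso m_pos by blast
  hence "2 * dim (Lam U) = DIM('v)" using Lam_plus_Je0_Lam[OF U] by simp
  thus ?thesis unfolding Lag_iff_Je using sL iso by blast
qed

lemma Lam_inter_E:
  assumes U: "subspace U" "U \<subseteq> E"
  shows "Lam U \<inter> E = U"
proof
  show "U \<subseteq> Lam U \<inter> E"
  proof
    fix u assume u: "u \<in> U"
    have "Jw [] u \<in> Lam_gens U" unfolding Lam_gens_def using u by (intro UnI1 CollectI exI[of _ "[]"] exI[of _ u]) auto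
    hence "u \<in> Lam U" unfolding Lam_def by (simp add: span_base)
    thus "u \<in> Lam U \<inter> E" using u U(2) by auto
  qed
next
  have "proj_E ` Lam_gens U \<subseteq> U"
  proof
    fix y assume "y \<in> proj_E ` Lam_gens U"
    then obtain g where g: "g \<in> Lam_gens U" "y = proj_E g" by blast
    show "y \<in> U"
      using g(1) unfolding Lam_gens_def
    proof (elim UnE CollectE exE conjE)
      fix xs u assume "g = Jw xs u" "set xs \<subseteq> {..<m}" "u \<in> U"
      then obtain \<kappa> where "proj_E (Jw xs u) = \<kappa> *\<^sub>R u" using proj_E_Jw_E U(2) by blast
      thus "y \<in> U" using g(2) \<open>g = Jw xs u\<close> \<open>u \<in> U\<close> U(1) by (simp add: subspace_scale)
    next
      fix xs w assume "g = Jw xs w" "set xs \<subseteq> {..<m}" "odd (length xs)" "w \<in> E"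
      thus "y \<in> U" using g(2) proj_E_Jw_odd U(1) by (simp add: subspace_0)
    qed
  qed
  hence "span (proj_E ` Lam_gens U) \<subseteq> U" using U(1) span_minimal by blast
  hence PL: "proj_E ` Lam U \<subseteq> U" unfolding Lam_def using linear_span_image[OF proj_E_linear] by simp
  show "Lam U \<inter> E \<subseteq> U"
  proof
    fix x assume "x \<in> Lam U \<inter> E"
    hence "proj_E x = x" "proj_E x \<in> U" using proj_E_E PL by auto
    thus "x \<in> U" by simp
  qed
qed

lemma Jw_even_closed:
  assumes "\<And>a b x. a < m \<Longrightarrow> b < m \<Longrightarrow> x \<in> L \<Longrightarrow> Je a (Je b x) \<in> L"
  shows "set xs \<subseteq> {..<m} \<Longrightarrow> even (length xs) \<Longrightarrow> x \<in> L \<Longrightarrow> Jw xs x \<in> L"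
  by (induction xs rule: induct_list012) (use assms in auto)

lemma Lag_plus_Je_image:
  assumes L: "L \<in> Lag J" and a: "a < m"
  obtains l l' where "l \<in> L" "l' \<in> L" "v = l + Je a l'"
proof -
  let ?S = "{x + y | x y. x \<in> L \<and> y \<in> Je a ` L}"
  have sL: "subspace L" and iso: "\<forall>u\<in>L. \<forall>v\<in>L. \<forall>i<m. Je i u \<bullet> v = 0"
    and dL: "2 * dim L = DIM('v)"
    using L unfolding Lag_iff_Je by auto
  have sS: "subspace ?S" by (rule subspace_sums[OF sL linear_subspace_image[OF Je_linear sL]])
  have "dim ?S = DIM('v)" using dim_plus_Je_image[OF sL a] iso a dL by auto
  hence "span ?S = UNIV" by (simp add: dim_eq_full)
  moreover have "span ?S = ?S" using sS by (simp only: span_eq_iff)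
  ultimately have "?S = UNIV" by simp
  hence "v \<in> ?S" by (simp only: UNIV_I)
  then obtain l l' where "l \<in> L" "l' \<in> L" "v = l + Je a l'" by blast
  thus ?thesis by (rule that)
qed

lemma Lag_Je_Je_closed:
  assumes L: "L \<in> Lag J" and ab: "a < m" "b < m" and x: "x \<in> L"
  shows "Je a (Je b x) \<in> L"
proof -
  have iso: "\<forall>u\<in>L. \<forall>v\<in>L. \<forall>i<m. Je i u \<bullet> v = 0" using L unfolding Lag_iff_Je by auto
  obtain l l' where ll: "l \<in> L" "l' \<in> L" "Je a (Je b x) = l + Je a l'"
    using Lag_plus_Je_image[OF L ab(1)] by blast
  have "Je a l' \<bullet> Je a y = 0" if y: "y \<in> L" for y
  proof -
    have "Je a (Je b x) \<bullet> Je a y = Je b x \<bullet> y" by (rule Je_norm[OF ab(1)])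
    also have "\<dots> = 0" using iso x y ab by auto
    finally have "Je a (Je b x) \<bullet> Je a y = 0" .
    moreover have "l \<bullet> Je a y = - (Je a l \<bullet> y)" using Je_skew[of a y l] by (simp add: inner_commute)
    ultimately show ?thesis using iso ll y ab by (simp add: inner_add_left)
  qed
  hence "Je a l' \<bullet> Je a l' = 0" using ll(2) by blast
  hence "l' = 0" using Je_norm[OF ab(1)] by simp
  thus ?thesis using ll by (simp add: Je_zero)
qed

lemma Lag_Jw_even_closed:
  assumes "L \<in> Lag J" "set xs \<subseteq> {..<m}" "even (length xs)" "x \<in> L"
  shows "Jw xs x \<in> L"
  by (rule Jw_even_closed[OF Lag_Je_Je_closed[OF assms(1)] assms(2-4)])

lemma Lag_E_orthogonal_imp_Je0_image:
  assumes L: "L \<in> Lag J" and w: "w \<in> E" "\<forall>u\<in>L \<inter> E. w \<bullet> u = 0"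
  shows "w \<in> Je 0 ` L"
proof -
  have sL: "subspace L" and iso: "\<forall>u\<in>L. \<forall>v\<in>L. \<forall>i<m. Je i u \<bullet> v = 0"
    using L unfolding Lag_iff_Je by auto
  have proj_L: "proj_E x \<in> L \<inter> E" if "x \<in> L" for x
  proof -
    have "Jw g x \<in> L" if "g \<in> set gws" "x \<in> L" for g x
      using Lag_Jw_even_closed[OF L gen_word_props(1)[OF that(1)] _ that(2)] gen_word_props(3)[OF that(1)]
      by auto
    thus ?thesis using proj_E_closed[OF sL _ that] proj_E_in_E by auto
  qed
  have wL: "w \<bullet> l = 0" if "l \<in> L" for l
  proof -
    have "w \<bullet> l = proj_E w \<bullet> l" using proj_E_E[OF w(1)] by simp
    also have "\<dots> = w \<bullet> proj_E l" by (rule proj_E_sym)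
    also have "\<dots> = 0" using w(2) proj_L[OF that] by auto
    finally show ?thesis .
  qed
  obtain l l' where ll: "l \<in> L" "l' \<in> L" "w = l + Je 0 l'" using Lag_plus_Je_image[OF L m_pos] by blast
  have "0 = w \<bullet> l" using wL[OF ll(1)] by simp
  also have "\<dots> = l \<bullet> l" using ll iso m_pos by (simp add: inner_add_left)
  finally have "l = 0" by simp
  thus ?thesis using ll by simp
qed

lemma Lam_inter_E_subset:
  assumes L: "L \<in> Lag J"
  shows "Lam (L \<inter> E) \<subseteq> L"
  unfolding Lam_def
proof (rule span_minimal)
  show "subspace L" using L unfolding Lag_iff_Je by blast
  show "Lam_gens (L \<inter> E) \<subseteq> L"
  proof
    fix g assume "g \<in> Lam_gens (L \<inter> E)"
    thus "g \<in> L" unfolding Lam_gens_def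
    proof (elim UnE CollectE exE conjE)
      fix xs u assume "g = Jw xs u" "set xs \<subseteq> {..<m}" "even (length xs)" "u \<in> L \<inter> E"
      thus "g \<in> L" using Lag_Jw_even_closed[OF L] by blast
    next
      fix xs w assume g: "g = Jw xs w" "set xs \<subseteq> {..<m}" "odd (length xs)" "w \<in> E"
        "\<forall>u\<in>L \<inter> E. w \<bullet> u = 0"
      obtain l' where "l' \<in> L" "w = Je 0 l'" using Lag_E_orthogonal_imp_Je0_image[OF L g(4,5)] by blast
      moreover have "set (xs @ [0]) \<subseteq> {..<m}" using g(2) m_pos by auto
      ultimately show "g \<in> L" using Lag_Jw_even_closed[OF L, of "xs @ [0]" l'] g(1,3) by (simp add: Jw_append)
    qed
  qed
qed

lemma Lag_eq_Lam:
  assumes L: "L \<in> Lag J"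
  shows "L = Lam (L \<inter> E)"
proof -
  have sL: "subspace L" and dL: "2 * dim L = DIM('v)" using L unfolding Lag_iff_Je by auto
  have "Lam (L \<inter> E) \<in> Lag J" using Lam_Lag subspace_inter[OF sL subspace_E] by blast
  hence "dim L \<le> dim (Lam (L \<inter> E))" using dL unfolding Lag_iff_Je by auto
  moreover have "subspace (Lam (L \<inter> E))" unfolding Lam_def by simp
  ultimately show ?thesis using subspace_dim_equal[OF _ sL Lam_inter_E_subset[OF L]] by simp
qed

lemma hbracket_inner_e: "i < m \<Longrightarrow> hbracket J u v \<bullet> e i = Je i u \<bullet> v"
  unfolding hbracket_def Je_def using e_in
  by (simp add: inner_sum_left inner_Basis if_distrib cong: if_cong)

lemma Aut_Je_inner: assumes "\<xi> \<in> Aut_o J" "i < m" shows "Je i (\<xi> u) \<bullet> \<xi> v = Je i u \<bullet> v"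
proof -
  have "hbracket J (\<xi> u) (\<xi> v) = hbracket J u v" using assms(1) unfolding Aut_o_def by auto
  thus ?thesis using hbracket_inner_e[OF assms(2)] by metis
qed

lemma Aut_linear: "\<xi> \<in> Aut_o J \<Longrightarrow> linear \<xi>" unfolding Aut_o_def by auto
lemma Aut_bij: "\<xi> \<in> Aut_o J \<Longrightarrow> bij \<xi>" unfolding Aut_o_def by auto

lemma Aut_adjoint_Je:
  assumes A: "\<xi> \<in> Aut_o J" and c: "c < m"
  shows "adjoint \<xi> (Je c (\<xi> w)) = Je c w"
proof (rule vector_eq_rdot[THEN iffD1], rule allI)
  fix v
  have "adjoint \<xi> (Je c (\<xi> w)) \<bullet> v = Je c (\<xi> w) \<bullet> \<xi> v"
    using adjoint_works[OF Aut_linear[OF A], of v] by (simp add: inner_commute)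
  also have "\<dots> = Je c w \<bullet> v" by (rule Aut_Je_inner[OF A c])
  finally show "adjoint \<xi> (Je c (\<xi> w)) \<bullet> v = Je c w \<bullet> v" .
qed

lemma Aut_adjoint_eq_0_iff:
  assumes A: "\<xi> \<in> Aut_o J"
  shows "adjoint \<xi> y = 0 \<longleftrightarrow> y = 0"
proof
  assume "adjoint \<xi> y = 0"
  moreover obtain x where "\<xi> x = y" using Aut_bij[OF A] by (metis bij_pointE)
  ultimately have "y \<bullet> y = 0" using adjoint_works[OF Aut_linear[OF A], of x y] by simp
  thus "y = 0" by simp
qed (simp add: linear_0[OF adjoint_linear[OF Aut_linear[OF A]]])

text \<open>An automorphism preserves each form \<open>(J\<^sub>a u, v)\<close>, i.e. \<open>\<xi>\<^sup>* J\<^sub>a \<xi> = J\<^sub>a\<close>; comparing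
  this for \<open>J\<^sub>a\<close> and \<open>J\<^sub>a J\<^sub>a J\<^sub>b = - J\<^sub>b\<close> shows that \<open>\<xi>\<close> commutes with \<open>J\<^sub>a J\<^sub>b\<close>.\<close>

lemma Aut_commute_Je_Je:
  assumes A: "\<xi> \<in> Aut_o J" and ab: "a < m" "b < m"
  shows "Je a (Je b (\<xi> u)) = \<xi> (Je a (Je b u))"
proof -
  let ?\<eta> = "adjoint \<xi>"
  have lin: "linear ?\<eta>" by (rule adjoint_linear[OF Aut_linear[OF A]])
  have "?\<eta> (Je a (Je a (Je b (\<xi> u)))) = - Je b u"
    using Je_sq[OF ab(1)] Aut_adjoint_Je[OF A ab(2)] by (simp add: linear_neg[OF lin])
  moreover have "?\<eta> (Je a (\<xi> (Je a (Je b u)))) = - Je b u"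
    using Je_sq[OF ab(1)] Aut_adjoint_Je[OF A ab(1)] by simp
  ultimately have "?\<eta> (Je a (Je a (Je b (\<xi> u))) - Je a (\<xi> (Je a (Je b u)))) = 0"
    by (simp add: linear_diff[OF lin])
  hence "Je a (Je a (Je b (\<xi> u))) = Je a (\<xi> (Je a (Je b u)))"
    unfolding Aut_adjoint_eq_0_iff[OF A] by simp
  thus ?thesis using Je_inj[OF ab(1)] by blast
qed

lemma Aut_commute_Jw_even:
  assumes A: "\<xi> \<in> Aut_o J"
  shows "set xs \<subseteq> {..<m} \<Longrightarrow> even (length xs) \<Longrightarrow> \<xi> (Jw xs v) = Jw xs (\<xi> v)"
proof (induction xs rule: induct_list012)
  case 1 then show ?case by simp
next
  case (2 a) then show ?case by simp
next
  case (3 a b zs)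
  have ab: "a < m" "b < m" using "3.prems" by auto
  have "\<xi> (Jw zs v) = Jw zs (\<xi> v)" using 3 by auto
  thus ?case using Aut_commute_Je_Je[OF A ab, of "Jw zs v"] by simp
qed

lemma Aut_maps_E: assumes A: "\<xi> \<in> Aut_o J" and x: "x \<in> E" shows "\<xi> x \<in> E"
proof -
  have "Jw g (\<xi> x) = \<xi> x" if g: "g \<in> set gws" for g
  proof -
    have "even (length g)" using gen_word_props(3)[OF g] by auto
    hence "\<xi> (Jw g x) = Jw g (\<xi> x)" using Aut_commute_Jw_even[OF A gen_word_props(1)[OF g]] by blast
    thus ?thesis using x g by (simp add: E_def)
  qed
  thus ?thesis by (simp add: E_def)
qed

lemma Aut_inv_into: assumes A: "\<xi> \<in> Aut_o J" shows "inv_into UNIV \<xi> \<in> Aut_o J"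
proof -
  have b: "bij \<xi>" and l: "linear \<xi>" using A by (auto simp: Aut_o_def)
  have "linear (inv_into UNIV \<xi>)" using inj_linear_imp_inv_linear[OF l] b by (simp add: bij_is_inj)
  moreover have "bij (inv_into UNIV \<xi>)" using b by (rule bij_imp_bij_inv)
  moreover have "hbracket J (inv_into UNIV \<xi> u) (inv_into UNIV \<xi> v) = hbracket J u v" for u v
  proof -
    have h: "hbracket J (\<xi> x) (\<xi> y) = hbracket J x y" for x y using A unfolding Aut_o_def by blast
    have "\<xi> (inv_into UNIV \<xi> u) = u" "\<xi> (inv_into UNIV \<xi> v) = v" using b by (simp_all add: bij_is_surj surj_f_inv_f)
    thus ?thesis using h[of "inv_into UNIV \<xi> u" "inv_into UNIV \<xi> v"] by simp
  qed
  ultimately show ?thesis unfolding Aut_o_def by blast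
qed

lemma Aut_Lag:
  assumes A: "\<xi> \<in> Aut_o J" and L: "L \<in> Lag J"
  shows "\<xi> ` L \<in> Lag J"
proof -
  have l: "linear \<xi>" and b: "bij \<xi>" using A by (auto simp: Aut_o_def)
  have sL: "subspace L" and iso: "\<forall>u\<in>L. \<forall>v\<in>L. \<forall>i<m. Je i u \<bullet> v = 0" and dL: "2 * dim L = DIM('v)"
    using L unfolding Lag_iff_Je by auto
  have "subspace (\<xi> ` L)" using linear_subspace_image[OF l sL] .
  moreover have "\<forall>u\<in>\<xi> ` L. \<forall>v\<in>\<xi> ` L. \<forall>i<m. Je i u \<bullet> v = 0" using iso Aut_Je_inner[OF A] by auto
  moreover have "dim (\<xi> ` L) = dim L" using dim_image_eq[OF l] b by (metis bij_is_inj inj_on_subset subset_UNIV)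
  ultimately show ?thesis unfolding Lag_iff_Je using dL by simp
qed

lemma Aut_image_inter_E:
  assumes A: "\<xi> \<in> Aut_o J"
  shows "\<xi> ` L \<inter> E = \<xi> ` (L \<inter> E)"
proof
  show "\<xi> ` (L \<inter> E) \<subseteq> \<xi> ` L \<inter> E" using Aut_maps_E[OF A] by auto
  show "\<xi> ` L \<inter> E \<subseteq> \<xi> ` (L \<inter> E)"
  proof
    fix y assume y: "y \<in> \<xi> ` L \<inter> E"
    then obtain x where x: "x \<in> L" "y = \<xi> x" by auto
    have b: "bij \<xi>" using A by (simp add: Aut_o_def)
    have "inv_into UNIV \<xi> y = x" using x b by (simp add: bij_is_inj)
    moreover have "inv_into UNIV \<xi> y \<in> E" using Aut_maps_E[OF Aut_inv_into[OF A]] y by auto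
    ultimately show "y \<in> \<xi> ` (L \<inter> E)" using x by auto
  qed
qed

lemma Aut_dim_inter_E:
  assumes A: "\<xi> \<in> Aut_o J"
  shows "dim (\<xi> ` L \<inter> E) = dim (L \<inter> E)"
proof -
  have l: "linear \<xi>" and b: "bij \<xi>" using A by (auto simp: Aut_o_def)
  show ?thesis unfolding Aut_image_inter_E[OF A] using dim_image_eq[OF l] b by (metis bij_is_inj inj_on_subset subset_UNIV)
qed

lemma Je_invariant_imp_invariant_subspace: assumes "Je_invariant M" shows "invariant_subspace J M"
proof -
  have sM: "subspace M" using assms by (simp add: Je_invariant_def)
  have "J z x \<in> M" if "x \<in> M" for z x
  proof -
    have "J z x = (\<Sum>i<m. (z \<bullet> e i) *\<^sub>R Je i x)" by (rule J_expand)
    also have "\<dots> \<in> M" using assms that unfolding Je_invariant_def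
      by (intro subspace_sum[OF sM] subspace_scale[OF sM]) auto
    finally show ?thesis .
  qed
  thus ?thesis unfolding invariant_subspace_def using sM by auto
qed

lemma invariant_subspace_imp_Je_invariant: "invariant_subspace J M \<Longrightarrow> Je_invariant M"
  unfolding invariant_subspace_def Je_invariant_def Je_def by auto

definition Je_cyclic :: "'v \<Rightarrow> 'v set" where
  "Je_cyclic x = span {Jw xs x | xs. set xs \<subseteq> {..<m}}"

lemma in_Je_cyclic: "x \<in> Je_cyclic x"
  unfolding Je_cyclic_def by (rule span_base) (auto intro: exI[of _ "[]"])

lemma Je_invariant_Je_cyclic: "Je_invariant (Je_cyclic x)"
  unfolding Je_invariant_def
proof (intro conjI allI impI ballI)
  show "subspace (Je_cyclic x)" unfolding Je_cyclic_def by simp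
  fix i v assume i: "i < m" and v: "v \<in> Je_cyclic x"
  show "Je i v \<in> Je_cyclic x" unfolding Je_cyclic_def
  proof (rule Je_span_closed[OF i _ v[unfolded Je_cyclic_def]])
    fix u assume "u \<in> {Jw xs x | xs. set xs \<subseteq> {..<m}}"
    then obtain xs where "u = Jw xs x" "set xs \<subseteq> {..<m}" by blast
    hence "Je i u \<in> {Jw xs x | xs. set xs \<subseteq> {..<m}}" using i by (auto intro!: exI[of _ "i # xs"])
    thus "Je i u \<in> span {Jw xs x | xs. set xs \<subseteq> {..<m}}" by (rule span_base)
  qed
qed

lemma Je_cyclic_subset:
  assumes W: "Je_invariant W" and x: "x \<in> W"
  shows "Je_cyclic x \<subseteq> W"
  unfolding Je_cyclic_def
proof (rule span_minimal)
  show "subspace W" using W by (simp add: Je_invariant_def)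
  show "{Jw xs x | xs. set xs \<subseteq> {..<m}} \<subseteq> W" using Je_invariant_Jw[OF W _ x] by blast
qed

lemma proj_E_Je_cyclic:
  assumes x: "x \<in> E"
  shows "proj_E ` Je_cyclic x \<subseteq> span {x}"
proof -
  have "proj_E ` {Jw xs x | xs. set xs \<subseteq> {..<m}} \<subseteq> span {x}"
  proof
    fix v assume "v \<in> proj_E ` {Jw xs x | xs. set xs \<subseteq> {..<m}}"
    then obtain xs where v: "v = proj_E (Jw xs x)" "set xs \<subseteq> {..<m}" by blast
    then obtain \<kappa> where "proj_E (Jw xs x) = \<kappa> *\<^sub>R x" using proj_E_Jw_E x by blast
    thus "v \<in> span {x}" using v by (simp add: span_base span_scale)
  qed
  thus ?thesis unfolding Je_cyclic_def linear_span_image[OF proj_E_linear, symmetric]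
    by (simp add: span_minimal)
qed

lemma irreducible_inter_E_unit:
  assumes W: "irreducible_submodule J W"
  obtains x where "x \<in> W \<inter> E" "x \<bullet> x = 1" "W \<inter> E \<subseteq> span {x}"
proof -
  have iW: "Je_invariant W" and nz: "W \<noteq> {0}" and sW: "subspace W"
    and irr: "\<And>U. invariant_subspace J U \<Longrightarrow> U \<subseteq> W \<Longrightarrow> U = {0} \<or> U = W"
    using W unfolding irreducible_submodule_def
    by (auto intro: invariant_subspace_imp_Je_invariant simp: invariant_subspace_def)
  obtain w where "w \<in> W" "w \<noteq> 0" using nz sW subspace_0 by blast
  then obtain y where y: "y \<in> W" "y \<noteq> 0" "y \<in> E" using Je_invariant_meets_E[OF iW] by blast
  define x where "x = (1 / norm y) *\<^sub>R y"
  have xW: "x \<in> W" unfolding x_def using sW y(1) by (simp add: subspace_scale)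
  have xE: "x \<in> E" unfolding x_def using subspace_E y(3) by (simp add: subspace_scale)
  have x1: "x \<bullet> x = 1" unfolding x_def using y(2) by (simp add: power2_norm_eq_inner[symmetric] divide_simps)
  have "x \<noteq> 0" using x1 by auto
  hence "Je_cyclic x \<noteq> {0}" using in_Je_cyclic[of x] by blast
  hence "Je_cyclic x = W"
    using irr[OF Je_invariant_imp_invariant_subspace[OF Je_invariant_Je_cyclic] Je_cyclic_subset[OF iW xW]]
    by blast
  hence "proj_E ` W \<subseteq> span {x}" using proj_E_Je_cyclic[OF xE] by simp
  hence "W \<inter> E \<subseteq> span {x}" using proj_E_E by force
  thus ?thesis using that xW xE x1 by blast
qed

lemma E_orthonormal_basis:
  assumes S: "sum_of_irreducibles J p"
  obtains xb where "\<forall>i<p. xb i \<in> E" "orthonormal_seq p xb" "span (xb ` {..<p}) = E"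
proof -
  obtain W where W: "\<forall>i<p. irreducible_submodule J (W i)"
    "\<forall>i<p. \<forall>j<p. i \<noteq> j \<longrightarrow> (\<forall>u\<in>W i. \<forall>v\<in>W j. u \<bullet> v = 0)" "span (\<Union>i<p. W i) = UNIV"
    using S unfolding sum_of_irreducibles_def by blast
  define xb where "xb i = (SOME x. x \<in> W i \<inter> E \<and> x \<bullet> x = 1 \<and> W i \<inter> E \<subseteq> span {x})" for i
  have xb: "xb i \<in> W i \<inter> E \<and> xb i \<bullet> xb i = 1 \<and> W i \<inter> E \<subseteq> span {xb i}" if "i < p" for i
    unfolding xb_def
    by (rule someI_ex) (use irreducible_inter_E_unit[OF W(1)[rule_format, OF that]] in blast)
  have on: "orthonormal_seq p xb" using xb W(2) unfolding orthonormal_seq_def by auto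
  have "proj_E ` (\<Union>i<p. W i) \<subseteq> span (xb ` {..<p})"
  proof
    fix y assume "y \<in> proj_E ` (\<Union>i<p. W i)"
    then obtain i w where iw: "i < p" "w \<in> W i" "y = proj_E w" by blast
    have iW: "Je_invariant (W i)"
      using W(1) iw(1) unfolding irreducible_submodule_def by (auto intro: invariant_subspace_imp_Je_invariant)
    have "proj_E w \<in> W i"
      using proj_E_closed[of "W i"] iW iw(2) Je_invariant_Jw[OF iW] gen_word_props(1) by (auto simp: Je_invariant_def)
    hence "proj_E w \<in> span {xb i}" using xb[OF iw(1)] proj_E_in_E by blast
    moreover have "span {xb i} \<subseteq> span (xb ` {..<p})" using iw(1) by (intro span_mono) auto
    ultimately show "y \<in> span (xb ` {..<p})" using iw(3) by blast
  qed
  hence "span (proj_E ` (\<Union>i<p. W i)) \<subseteq> span (xb ` {..<p})" by (simp add: span_minimal)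
  hence "proj_E ` UNIV \<subseteq> span (xb ` {..<p})" using W(3) linear_span_image[OF proj_E_linear] by metis
  hence "E \<subseteq> span (xb ` {..<p})" using proj_E_E by (metis image_subset_iff UNIV_I subsetI)
  moreover have "span (xb ` {..<p}) \<subseteq> E" using xb subspace_E by (intro span_minimal) auto
  ultimately show ?thesis using that xb on by blast
qed

end

lemma clifford_frame_8k_exists:
  fixes J :: "'z::euclidean_space \<Rightarrow> 'v::euclidean_space \<Rightarrow> 'v"
  assumes "DIM('z) mod 8 = 0" "clifford_module J"
  obtains e where "clifford_frame_8k J e DIM('z) (DIM('z) div 8)"
proof -
  obtain e :: "nat \<Rightarrow> 'z" where "bij_betw e {0..<DIM('z)} Basis"
    using ex_bij_betw_nat_finite[OF finite_Basis] by blast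
  hence e: "bij_betw e {..<DIM('z)} Basis" by (simp add: atLeast0LessThan)
  have "clifford_frame_8k J e DIM('z) (DIM('z) div 8)"
  proof unfold_locales
    show "DIM('z) = 8 * (DIM('z) div 8)" using assms(1) div_mult_mod_eq[of "DIM('z)" 8] by simp
  qed (use assms(2) e in auto)
  thus ?thesis by (rule that)
qed

section \<open>Equivariant isometries, orbits and stabilisers\<close>

locale clifford_frame_8k_basis = clifford_frame_8k J e m k for J :: "'z::euclidean_space \<Rightarrow> 'v::euclidean_space \<Rightarrow> 'v" and e m k +
  fixes p :: nat and xb :: "nat \<Rightarrow> 'v"
  assumes xb_E: "\<forall>i<p. xb i \<in> E" and xb_orthonormal: "orthonormal_seq p xb" and xb_span: "span (xb ` {..<p}) = E"
begin

lemma dim_E: "dim E = p" using orthonormal_seq_dim[OF xb_orthonormal] xb_span by simp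

lemma E_expansion: "v \<in> E \<Longrightarrow> v = (\<Sum>i<p. (v \<bullet> xb i) *\<^sub>R xb i)"
  using orthonormal_seq_expansion[OF xb_orthonormal] xb_span by simp

lemma E_parseval: "v \<in> E \<Longrightarrow> w \<in> E \<Longrightarrow> v \<bullet> w = (\<Sum>i<p. (v \<bullet> xb i) * (w \<bullet> xb i))"
  using orthonormal_seq_parseval[OF xb_orthonormal] xb_span by simp

text \<open>A fact about square matrices, proved with the help of \<open>E\<close>: the rows of \<open>Q\<close> define a second
  orthonormal basis of \<open>E\<close>, and Parseval's identity for it gives orthonormality of the columns.\<close>

lemma orth_group_cols:
  assumes "Q \<in> carrier (orth_group p)"
  shows "\<forall>i<p. \<forall>j<p. (\<Sum>k<p. Q k i * Q k j) = (if i = j then 1 else 0)"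
proof -
  have Q: "\<forall>i<p. \<forall>j<p. (\<Sum>k<p. Q i k * Q j k) = (if i = j then 1 else 0)" using assms orth_group_carrier_iff by blast
  define r where "r k = (\<Sum>i<p. Q k i *\<^sub>R xb i)" for k
  have rE: "\<forall>k<p. r k \<in> E" unfolding r_def using xb_E subspace_E
    by (auto intro!: subspace_sum subspace_scale)
  have rxb: "r k \<bullet> xb i = Q k i" if "i < p" for k i unfolding r_def using orthonormal_seq_coeff[OF xb_orthonormal that] .
  have ron: "orthonormal_seq p r" unfolding orthonormal_seq_def
  proof (intro allI impI)
    fix i j assume ij: "i < p" "j < p"
    have "r i \<bullet> r j = (\<Sum>l<p. (r i \<bullet> xb l) * (r j \<bullet> xb l))" using E_parseval rE ij by blast
    also have "\<dots> = (\<Sum>l<p. Q i l * Q j l)" using rxb by simp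
    finally show "r i \<bullet> r j = (if i = j then 1 else 0)" using Q ij by simp
  qed
  have rspan: "span (r ` {..<p}) = E" using orthonormal_seq_span_eq[OF ron subspace_E rE dim_E] .
  show ?thesis
  proof (intro allI impI)
    fix i j assume ij: "i < p" "j < p"
    have "xb i \<bullet> xb j = (\<Sum>k<p. (xb i \<bullet> r k) * (xb j \<bullet> r k))"
      using orthonormal_seq_parseval[OF ron] rspan xb_E ij by simp
    also have "\<dots> = (\<Sum>k<p. Q k i * Q k j)" using rxb ij by (simp add: inner_commute)
    finally show "(\<Sum>k<p. Q k i * Q k j) = (if i = j then 1 else 0)" using xb_orthonormal ij unfolding orthonormal_seq_def by simp
  qed
qed

definition mat_on_E :: "(nat \<Rightarrow> nat \<Rightarrow> real) \<Rightarrow> 'v \<Rightarrow> 'v" where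
  "mat_on_E Q v = (\<Sum>j<p. (v \<bullet> xb j) *\<^sub>R (\<Sum>i<p. Q i j *\<^sub>R xb i))"

lemma mat_on_E_linear: "linear (mat_on_E Q)"
proof (rule linearI)
  fix u v show "mat_on_E Q (u + v) = mat_on_E Q u + mat_on_E Q v"
    by (simp add: mat_on_E_def inner_add_left scaleR_add_left sum.distrib)
next
  fix c :: real and v show "mat_on_E Q (c *\<^sub>R v) = c *\<^sub>R mat_on_E Q v"
    by (simp add: mat_on_E_def scaleR_sum_right mult.assoc)
qed

lemma mat_on_E_coeff: assumes i: "i < p" shows "mat_on_E Q v \<bullet> xb i = (\<Sum>j<p. (v \<bullet> xb j) * Q i j)"
proof -
  have "mat_on_E Q v \<bullet> xb i = (\<Sum>j<p. (v \<bullet> xb j) * ((\<Sum>ia<p. Q ia j *\<^sub>R xb ia) \<bullet> xb i))"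
    unfolding mat_on_E_def by (simp only: inner_sum_left inner_scaleR_left)
  also have "\<dots> = (\<Sum>j<p. (v \<bullet> xb j) * Q i j)" using orthonormal_seq_coeff[OF xb_orthonormal i] by simp
  finally show ?thesis .
qed

lemma mat_on_E_E: "mat_on_E Q v \<in> E"
  unfolding mat_on_E_def using xb_E subspace_E by (auto intro!: subspace_sum subspace_scale)

lemma mat_on_E_xb: "j < p \<Longrightarrow> mat_on_E Q (xb j) = (\<Sum>i<p. Q i j *\<^sub>R xb i)"
proof -
  assume j: "j < p"
  have "mat_on_E Q (xb j) = (\<Sum>l<p. if l = j then (\<Sum>i<p. Q i l *\<^sub>R xb i) else 0)"
    unfolding mat_on_E_def using xb_orthonormal j unfolding orthonormal_seq_def by (intro sum.cong) (auto simp: inner_commute)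
  also have "\<dots> = (\<Sum>i<p. Q i j *\<^sub>R xb i)" using j by simp
  finally show ?thesis .
qed

lemma mat_on_E_iso:
  assumes Q: "Q \<in> carrier (orth_group p)" and v: "v \<in> E" and w: "w \<in> E"
  shows "mat_on_E Q v \<bullet> mat_on_E Q w = v \<bullet> w"
proof -
  have C: "\<forall>i<p. \<forall>j<p. (\<Sum>k<p. Q k i * Q k j) = (if i = j then 1 else 0)" using orth_group_cols[OF Q] .
  have "mat_on_E Q v \<bullet> mat_on_E Q w = (\<Sum>i<p. (mat_on_E Q v \<bullet> xb i) * (mat_on_E Q w \<bullet> xb i))"
    using E_parseval mat_on_E_E by blast
  also have "\<dots> = (\<Sum>i<p. (\<Sum>j<p. (v \<bullet> xb j) * Q i j) * (\<Sum>l<p. (w \<bullet> xb l) * Q i l))"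
    by (simp add: mat_on_E_coeff)
  also have "\<dots> = (\<Sum>i<p. \<Sum>j<p. \<Sum>l<p. (v \<bullet> xb j) * (w \<bullet> xb l) * (Q i j * Q i l))"
    by (simp add: sum_product algebra_simps)
  also have "\<dots> = (\<Sum>j<p. \<Sum>l<p. \<Sum>i<p. (v \<bullet> xb j) * (w \<bullet> xb l) * (Q i j * Q i l))"
    by (rule trans[OF sum.swap], rule sum.cong[OF refl], rule sum.swap)
  also have "\<dots> = (\<Sum>j<p. \<Sum>l<p. (v \<bullet> xb j) * (w \<bullet> xb l) * (if j = l then 1 else 0))"
    using C by (simp add: sum_distrib_left[symmetric])
  also have "\<dots> = (\<Sum>j<p. (v \<bullet> xb j) * (w \<bullet> xb j))"
    by (simp add: if_distrib cong: if_cong)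
  also have "\<dots> = v \<bullet> w" using E_parseval[OF v w] by simp
  finally show ?thesis .
qed

definition Iso_J :: "('v \<Rightarrow> 'v) set" where
  "Iso_J = {\<xi>. linear \<xi> \<and> (\<forall>u v. \<xi> u \<bullet> \<xi> v = u \<bullet> v) \<and> commutes_J \<xi>}"

definition iso_of_mat :: "(nat \<Rightarrow> nat \<Rightarrow> real) \<Rightarrow> 'v \<Rightarrow> 'v" where "iso_of_mat Q = equivariant_ext (mat_on_E Q)"

lemma iso_of_mat_props:
  assumes Q: "Q \<in> carrier (orth_group p)"
  shows "iso_of_mat Q \<in> Iso_J" "\<And>x. x \<in> E \<Longrightarrow> iso_of_mat Q x = mat_on_E Q x"
proof -
  have T: "linear (mat_on_E Q)" "\<forall>x\<in>E. mat_on_E Q x \<in> E" "\<forall>x\<in>E. \<forall>y\<in>E. mat_on_E Q x \<bullet> mat_on_E Q y = x \<bullet> y"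
    using mat_on_E_linear mat_on_E_E mat_on_E_iso[OF Q] by auto
  show "iso_of_mat Q \<in> Iso_J" unfolding Iso_J_def iso_of_mat_def commutes_J_def using equivariant_ext_props[OF T] by blast
  show "iso_of_mat Q x = mat_on_E Q x" if "x \<in> E" for x unfolding iso_of_mat_def using equivariant_ext_props(4)[OF T that] .
qed

lemma Iso_J_linear: "\<xi> \<in> Iso_J \<Longrightarrow> linear \<xi>" unfolding Iso_J_def by auto
lemma Iso_J_inner: "\<xi> \<in> Iso_J \<Longrightarrow> \<xi> u \<bullet> \<xi> v = u \<bullet> v" unfolding Iso_J_def by auto
lemma Iso_J_commutes_J: "\<xi> \<in> Iso_J \<Longrightarrow> commutes_J \<xi>" unfolding Iso_J_def by auto

lemma Iso_J_inj: "\<xi> \<in> Iso_J \<Longrightarrow> inj \<xi>"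
proof (rule injI)
  fix u v assume H: "\<xi> \<in> Iso_J" and eq: "\<xi> u = \<xi> v"
  have "\<xi> (u - v) = 0" using eq linear_diff[OF Iso_J_linear[OF H]] by simp
  hence "(u - v) \<bullet> (u - v) = 0" using Iso_J_inner[OF H, of "u - v" "u - v"] by simp
  thus "u = v" by simp
qed

lemma Iso_J_bij: "\<xi> \<in> Iso_J \<Longrightarrow> bij \<xi>"
  using Iso_J_inj linear_inj_imp_surj[OF Iso_J_linear] by (simp add: bij_def)

lemma Iso_J_in_Aut: assumes H: "\<xi> \<in> Iso_J" shows "\<xi> \<in> Aut_o J"
proof -
  have l: "linear \<xi>" using Iso_J_linear[OF H] .
  have Jc: "J z (\<xi> u) = \<xi> (J z u)" for z u
  proof -
    have "J z (\<xi> u) = (\<Sum>i<m. (z \<bullet> e i) *\<^sub>R Je i (\<xi> u))" by (rule J_expand)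
    also have "\<dots> = (\<Sum>i<m. (z \<bullet> e i) *\<^sub>R \<xi> (Je i u))" using Iso_J_commutes_J[OF H] unfolding commutes_J_def by simp
    also have "\<dots> = \<xi> (\<Sum>i<m. (z \<bullet> e i) *\<^sub>R Je i u)" by (simp add: linear_sum[OF l] linear_scale[OF l])
    also have "\<dots> = \<xi> (J z u)" using J_expand by simp
    finally show ?thesis .
  qed
  have "hbracket J (\<xi> u) (\<xi> v) = hbracket J u v" for u v
    unfolding hbracket_def using Jc Iso_J_inner[OF H] by simp
  thus ?thesis unfolding Aut_o_def using l Iso_J_bij[OF H] by blast
qed

lemma Iso_J_id: "id \<in> Iso_J" unfolding Iso_J_def commutes_J_def by (auto simp: linear_id)

lemma Iso_J_comp: "\<xi> \<in> Iso_J \<Longrightarrow> \<eta> \<in> Iso_J \<Longrightarrow> \<xi> \<circ> \<eta> \<in> Iso_J"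
  unfolding Iso_J_def commutes_J_def by (auto intro: linear_compose)

lemma Iso_J_inv: assumes H: "\<xi> \<in> Iso_J" shows "inv_into UNIV \<xi> \<in> Iso_J"
proof -
  have b: "bij \<xi>" using Iso_J_bij[OF H] .
  let ?i = "inv_into UNIV \<xi>"
  have fi: "\<xi> (?i y) = y" for y using b by (simp add: bij_is_surj surj_f_inv_f)
  have "linear ?i" using inj_linear_imp_inv_linear[OF Iso_J_linear[OF H] Iso_J_inj[OF H]] .
  moreover have "?i u \<bullet> ?i v = u \<bullet> v" for u v using Iso_J_inner[OF H, of "?i u" "?i v"] fi by simp
  moreover have "commutes_J ?i" unfolding commutes_J_def
  proof (intro allI impI)
    fix i v assume i: "i < m"
    have "\<xi> (?i (Je i v)) = \<xi> (Je i (?i v))"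
      using fi Iso_J_commutes_J[OF H] i unfolding commutes_J_def by simp
    thus "?i (Je i v) = Je i (?i v)" using Iso_J_inj[OF H] by (simp add: inj_eq)
  qed
  ultimately show ?thesis unfolding Iso_J_def by blast
qed

lemma Aut_group_inv:
  assumes A: "\<xi> \<in> Aut_o J"
  shows "m_inv (Aut_group J) \<xi> = inv_into UNIV \<xi>"
proof -
  have b: "bij \<xi>" using Aut_bij[OF A] .
  let ?i = "inv_into UNIV \<xi>"
  have 1: "\<xi> \<circ> ?i = id" using b by (simp add: fun_eq_iff bij_is_surj surj_f_inv_f)
  have 2: "?i \<circ> \<xi> = id" using b by (simp add: fun_eq_iff bij_is_inj)
  show ?thesis unfolding m_inv_def Aut_group_def map_group_def
  proof (simp, rule the_equality)
    show "?i \<in> Aut_o J \<and> \<xi> \<circ> ?i = id \<and> ?i \<circ> \<xi> = id" using Aut_inv_into[OF A] 1 2 by simp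
    fix y assume y: "y \<in> Aut_o J \<and> \<xi> \<circ> y = id \<and> y \<circ> \<xi> = id"
    have "y = y \<circ> (\<xi> \<circ> ?i)" using 1 by simp
    also have "\<dots> = (y \<circ> \<xi>) \<circ> ?i" by (simp add: comp_assoc)
    also have "\<dots> = ?i" using y by simp
    finally show "y = ?i" .
  qed
qed

lemma Iso_J_subgroup: "subgroup Iso_J (Aut_group J)"
proof (rule subgroup.intro)
  show "Iso_J \<subseteq> carrier (Aut_group J)" using Iso_J_in_Aut by (auto simp: Aut_group_def map_group_def)
  show "x \<otimes>\<^bsub>Aut_group J\<^esub> y \<in> Iso_J" if "x \<in> Iso_J" "y \<in> Iso_J" for x y
    using Iso_J_comp that by (simp add: Aut_group_def map_group_def)
  show "\<one>\<^bsub>Aut_group J\<^esub> \<in> Iso_J" using Iso_J_id by (simp add: Aut_group_def map_group_def)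
  show "inv\<^bsub>Aut_group J\<^esub> x \<in> Iso_J" if "x \<in> Iso_J" for x
    using Aut_group_inv[OF Iso_J_in_Aut[OF that]] Iso_J_inv[OF that] by simp
qed

definition mat_of_iso :: "('v \<Rightarrow> 'v) \<Rightarrow> nat \<Rightarrow> nat \<Rightarrow> real" where
  "mat_of_iso \<xi> = (\<lambda>i j. if i < p \<and> j < p then \<xi> (xb j) \<bullet> xb i else 0)"

lemma Iso_J_maps_E: "\<xi> \<in> Iso_J \<Longrightarrow> x \<in> E \<Longrightarrow> \<xi> x \<in> E" using commutes_J_E Iso_J_commutes_J by blast

lemma linear_eq_on_E:
  assumes "linear f" "linear g" "\<And>j. j < p \<Longrightarrow> f (xb j) = g (xb j)" "x \<in> E"
  shows "f x = g x"
  using linear_eq_on_span[OF assms(1,2), of "xb ` {..<p}" x] assms(3,4) xb_span by auto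

lemma mat_of_iso_in_orth_group: assumes H: "\<xi> \<in> Iso_J" shows "mat_of_iso \<xi> \<in> carrier (orth_group p)"
proof -
  let ?f = "\<lambda>k. \<xi> (xb k)"
  have fE: "\<forall>k<p. ?f k \<in> E" using Iso_J_maps_E[OF H] xb_E by auto
  have fon: "orthonormal_seq p ?f" using xb_orthonormal Iso_J_inner[OF H] unfolding orthonormal_seq_def by simp
  have fspan: "span (?f ` {..<p}) = E" using orthonormal_seq_span_eq[OF fon subspace_E fE dim_E] .
  have "(\<Sum>k<p. mat_of_iso \<xi> i k * mat_of_iso \<xi> j k) = (if i = j then 1 else 0)" if ij: "i < p" "j < p" for i j
  proof -
    have "xb i \<bullet> xb j = (\<Sum>k<p. (xb i \<bullet> ?f k) * (xb j \<bullet> ?f k))"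
      using orthonormal_seq_parseval[OF fon] fspan xb_E ij by simp
    thus ?thesis using ij xb_orthonormal unfolding mat_of_iso_def orthonormal_seq_def by (simp add: inner_commute)
  qed
  thus ?thesis unfolding orth_group_carrier_iff mat_of_iso_def by auto
qed

lemma iso_of_mat_of_iso: assumes H: "\<xi> \<in> Iso_J" shows "iso_of_mat (mat_of_iso \<xi>) = \<xi>"
proof (rule commutes_J_eq_on_E_imp_eq)
  have O: "mat_of_iso \<xi> \<in> carrier (orth_group p)" by (rule mat_of_iso_in_orth_group[OF H])
  show "linear (iso_of_mat (mat_of_iso \<xi>))" "commutes_J (iso_of_mat (mat_of_iso \<xi>))" using iso_of_mat_props(1)[OF O] Iso_J_linear Iso_J_commutes_J by auto
  show "linear \<xi>" "commutes_J \<xi>" using H Iso_J_linear Iso_J_commutes_J by auto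
  fix x assume x: "x \<in> E"
  show "iso_of_mat (mat_of_iso \<xi>) x = \<xi> x"
  proof (rule linear_eq_on_E[OF _ _ _ x])
    show "linear (iso_of_mat (mat_of_iso \<xi>))" "linear \<xi>" using iso_of_mat_props(1)[OF O] Iso_J_linear H by auto
    fix j assume j: "j < p"
    have "iso_of_mat (mat_of_iso \<xi>) (xb j) = mat_on_E (mat_of_iso \<xi>) (xb j)" using iso_of_mat_props(2)[OF O] xb_E j by auto
    also have "\<dots> = (\<Sum>i<p. (\<xi> (xb j) \<bullet> xb i) *\<^sub>R xb i)" using j by (simp add: mat_on_E_xb mat_of_iso_def)
    also have "\<dots> = \<xi> (xb j)" using E_expansion[OF Iso_J_maps_E[OF H xb_E[rule_format, OF j]]] by simp
    finally show "iso_of_mat (mat_of_iso \<xi>) (xb j) = \<xi> (xb j)" .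
  qed
qed

lemma mat_of_iso_of_mat: assumes Q: "Q \<in> carrier (orth_group p)" shows "mat_of_iso (iso_of_mat Q) = Q"
proof (intro ext)
  fix i j
  have z: "\<not> (i < p \<and> j < p) \<Longrightarrow> Q i j = 0" using Q orth_group_carrier_iff by blast
  show "mat_of_iso (iso_of_mat Q) i j = Q i j"
  proof (cases "i < p \<and> j < p")
    case True
    have "iso_of_mat Q (xb j) = mat_on_E Q (xb j)" using iso_of_mat_props(2)[OF Q] xb_E True by auto
    thus ?thesis using True by (simp add: mat_of_iso_def mat_on_E_xb orthonormal_seq_coeff[OF xb_orthonormal])
  qed (use z in \<open>auto simp: mat_of_iso_def\<close>)
qed

lemma mat_of_iso_comp:
  assumes H1: "\<xi> \<in> Iso_J" and H2: "\<eta> \<in> Iso_J"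
  shows "mat_of_iso (\<xi> \<circ> \<eta>) = mat_mult p (mat_of_iso \<xi>) (mat_of_iso \<eta>)"
proof (intro ext)
  fix i j
  show "mat_of_iso (\<xi> \<circ> \<eta>) i j = mat_mult p (mat_of_iso \<xi>) (mat_of_iso \<eta>) i j"
  proof (cases "i < p \<and> j < p")
    case True
    have "\<eta> (xb j) = (\<Sum>l<p. (\<eta> (xb j) \<bullet> xb l) *\<^sub>R xb l)"
      using E_expansion[OF Iso_J_maps_E[OF H2 xb_E[rule_format]]] True by auto
    hence "\<xi> (\<eta> (xb j)) = \<xi> (\<Sum>l<p. (\<eta> (xb j) \<bullet> xb l) *\<^sub>R xb l)" by simp
    also have "\<dots> = (\<Sum>l<p. (\<eta> (xb j) \<bullet> xb l) *\<^sub>R \<xi> (xb l))"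
      by (simp add: linear_sum[OF Iso_J_linear[OF H1]] linear_scale[OF Iso_J_linear[OF H1]])
    finally have "\<xi> (\<eta> (xb j)) = (\<Sum>l<p. (\<eta> (xb j) \<bullet> xb l) *\<^sub>R \<xi> (xb l))" .
    hence "\<xi> (\<eta> (xb j)) \<bullet> xb i = (\<Sum>l<p. (\<xi> (xb l) \<bullet> xb i) * (\<eta> (xb j) \<bullet> xb l))"
      by (simp add: inner_sum_left mult.commute)
    thus ?thesis using True by (simp add: mat_of_iso_def mat_mult_def)
  qed (auto simp: mat_of_iso_def mat_mult_def)
qed

lemma iso_of_mat_group_iso: "iso_of_mat \<in> iso (orth_group p) (map_group Iso_J)"
proof -
  have "iso_of_mat (mat_mult p Q R) = iso_of_mat Q \<circ> iso_of_mat R"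
    if Q: "Q \<in> carrier (orth_group p)" and R: "R \<in> carrier (orth_group p)" for Q R
  proof -
    have "iso_of_mat (mat_mult p Q R) = iso_of_mat (mat_of_iso (iso_of_mat Q \<circ> iso_of_mat R))"
      using mat_of_iso_comp[OF iso_of_mat_props(1)[OF Q] iso_of_mat_props(1)[OF R]] mat_of_iso_of_mat[OF Q] mat_of_iso_of_mat[OF R] by simp
    also have "\<dots> = iso_of_mat Q \<circ> iso_of_mat R" using iso_of_mat_of_iso Iso_J_comp iso_of_mat_props(1) Q R by blast
    finally show ?thesis .
  qed
  hence "iso_of_mat \<in> hom (orth_group p) (map_group Iso_J)"
    using iso_of_mat_props(1) by (auto simp: hom_def)
  moreover have "bij_betw iso_of_mat (carrier (orth_group p)) (carrier (map_group Iso_J))"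
  proof (rule bij_betw_byWitness[where f'=mat_of_iso])
    show "\<forall>Q\<in>carrier (orth_group p). mat_of_iso (iso_of_mat Q) = Q" using mat_of_iso_of_mat by auto
    show "\<forall>\<xi>\<in>carrier (map_group Iso_J). iso_of_mat (mat_of_iso \<xi>) = \<xi>" using iso_of_mat_of_iso by (simp add: map_group_def)
    show "iso_of_mat ` carrier (orth_group p) \<subseteq> carrier (map_group Iso_J)"
      using iso_of_mat_props(1) by (auto simp: map_group_def)
    show "mat_of_iso ` carrier (map_group Iso_J) \<subseteq> carrier (orth_group p)"
      using mat_of_iso_in_orth_group by (auto simp: map_group_def)
  qed
  ultimately show ?thesis unfolding iso_def by blast
qed

lemma mat_of_iso_group_iso: "mat_of_iso \<in> iso (map_group Iso_J) (orth_group p)"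
proof -
  have "mat_of_iso \<in> hom (map_group Iso_J) (orth_group p)"
    using mat_of_iso_in_orth_group mat_of_iso_comp by (auto simp: hom_def)
  moreover have "bij_betw mat_of_iso (carrier (map_group Iso_J)) (carrier (orth_group p))"
  proof (rule bij_betw_byWitness[where f'=iso_of_mat])
    show "\<forall>\<xi>\<in>carrier (map_group Iso_J). iso_of_mat (mat_of_iso \<xi>) = \<xi>" using iso_of_mat_of_iso by (simp add: map_group_def)
    show "\<forall>Q\<in>carrier (orth_group p). mat_of_iso (iso_of_mat Q) = Q" using mat_of_iso_of_mat by simp
    show "mat_of_iso ` carrier (map_group Iso_J) \<subseteq> carrier (orth_group p)"
      using mat_of_iso_in_orth_group by (auto simp: map_group_def)
    show "iso_of_mat ` carrier (orth_group p) \<subseteq> carrier (map_group Iso_J)"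
      using iso_of_mat_props(1) by (auto simp: map_group_def)
  qed
  ultimately show ?thesis unfolding iso_def by blast
qed

lemma Iso_J_image_E: assumes H: "\<xi> \<in> Iso_J" shows "\<xi> ` E = E"
proof
  show "\<xi> ` E \<subseteq> E" using Iso_J_maps_E[OF H] by auto
  show "E \<subseteq> \<xi> ` E"
  proof
    fix x assume x: "x \<in> E"
    have "\<xi> (inv_into UNIV \<xi> x) = x" using Iso_J_bij[OF H] by (simp add: bij_is_surj surj_f_inv_f)
    moreover have "inv_into UNIV \<xi> x \<in> E" using Iso_J_maps_E[OF Iso_J_inv[OF H] x] .
    ultimately show "x \<in> \<xi> ` E" by (metis imageI)
  qed
qed

lemma Iso_J_image_Lam_gens: assumes H: "\<xi> \<in> Iso_J" and U: "U \<subseteq> E" shows "\<xi> ` Lam_gens U = Lam_gens (\<xi> ` U)"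
proof
  have cp: "\<xi> (Jw xs v) = Jw xs (\<xi> v)" if "set xs \<subseteq> {..<m}" for xs v using commutes_J_Jw[OF Iso_J_commutes_J[OF H] that] .
  show "\<xi> ` Lam_gens U \<subseteq> Lam_gens (\<xi> ` U)"
  proof
    fix y assume "y \<in> \<xi> ` Lam_gens U"
    then obtain g where g: "g \<in> Lam_gens U" "y = \<xi> g" by blast
    show "y \<in> Lam_gens (\<xi> ` U)" using g(1)[unfolded Lam_gens_def]
    proof (elim UnE CollectE exE conjE)
      fix xs u assume a: "g = Jw xs u" "set xs \<subseteq> {..<m}" "even (length xs)" "u \<in> U"
      show "y \<in> Lam_gens (\<xi> ` U)" unfolding Lam_gens_def using a g(2) cp[OF a(2)]
        by (intro UnI1 CollectI exI[of _ xs] exI[of _ "\<xi> u"]) auto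
    next
      fix xs w assume a: "g = Jw xs w" "set xs \<subseteq> {..<m}" "odd (length xs)" "w \<in> E" "\<forall>u\<in>U. w \<bullet> u = 0"
      have "\<forall>u\<in>\<xi> ` U. \<xi> w \<bullet> u = 0" using a(5) Iso_J_inner[OF H] by auto
      thus "y \<in> Lam_gens (\<xi> ` U)" unfolding Lam_gens_def using a g(2) cp[OF a(2)] Iso_J_maps_E[OF H a(4)]
        by (intro UnI2 CollectI exI[of _ xs] exI[of _ "\<xi> w"]) auto
    qed
  qed
  show "Lam_gens (\<xi> ` U) \<subseteq> \<xi> ` Lam_gens U"
  proof
    fix y assume "y \<in> Lam_gens (\<xi> ` U)"
    thus "y \<in> \<xi> ` Lam_gens U" unfolding Lam_gens_def[of "\<xi> ` U"]
    proof (elim UnE CollectE exE conjE)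
      fix xs u' assume a: "y = Jw xs u'" "set xs \<subseteq> {..<m}" "even (length xs)" "u' \<in> \<xi> ` U"
      then obtain u where u: "u \<in> U" "u' = \<xi> u" by blast
      have "Jw xs u \<in> Lam_gens U" unfolding Lam_gens_def using a u by blast
      thus "y \<in> \<xi> ` (Lam_gens U)" using a(1) u(2) cp[OF a(2)] by (metis imageI)
    next
      fix xs w' assume a: "y = Jw xs w'" "set xs \<subseteq> {..<m}" "odd (length xs)" "w' \<in> E" "\<forall>u\<in>\<xi> ` U. w' \<bullet> u = 0"
      obtain w where w: "w \<in> E" "w' = \<xi> w" using a(4) Iso_J_image_E[OF H] by blast
      have "\<forall>u\<in>U. w \<bullet> u = 0" using a(5) w(2) Iso_J_inner[OF H] by auto
      hence "Jw xs w \<in> Lam_gens U" unfolding Lam_gens_def using a w by blast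
      thus "y \<in> \<xi> ` (Lam_gens U)" using a(1) w(2) cp[OF a(2)] by (metis imageI)
    qed
  qed
qed

lemma Iso_J_Lam: assumes H: "\<xi> \<in> Iso_J" and U: "U \<subseteq> E" shows "\<xi> ` Lam U = Lam (\<xi> ` U)"
  unfolding Lam_def using linear_span_image[OF Iso_J_linear[OF H]] Iso_J_image_Lam_gens[OF H U] by metis

lemma Iso_J_map_basis:
  assumes y: "orthonormal_seq p y" "\<forall>j<p. y j \<in> E"
  shows "\<exists>\<xi>\<in>Iso_J. \<forall>j<p. \<xi> (xb j) = y j"
proof -
  define Q where "Q = (\<lambda>i j. if i < p \<and> j < p then y j \<bullet> xb i else 0)"
  have yspan: "span (y ` {..<p}) = E" using orthonormal_seq_span_eq[OF y(1) subspace_E y(2) dim_E] .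
  have O: "Q \<in> carrier (orth_group p)" unfolding orth_group_carrier_iff
  proof (intro conjI allI impI)
    fix i j assume "\<not> (i < p \<and> j < p)" thus "Q i j = 0" by (auto simp: Q_def)
  next
    fix i j assume ij: "i < p" "j < p"
    have "xb i \<bullet> xb j = (\<Sum>k<p. (xb i \<bullet> y k) * (xb j \<bullet> y k))"
      using orthonormal_seq_parseval[OF y(1)] yspan xb_E ij by simp
    thus "(\<Sum>k<p. Q i k * Q j k) = (if i = j then 1 else 0)"
      using ij xb_orthonormal unfolding Q_def orthonormal_seq_def by (simp add: inner_commute)
  qed
  have "iso_of_mat Q (xb j) = y j" if j: "j < p" for j
  proof -
    have "iso_of_mat Q (xb j) = mat_on_E Q (xb j)" using iso_of_mat_props(2)[OF O] xb_E j by auto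
    also have "\<dots> = (\<Sum>i<p. (y j \<bullet> xb i) *\<^sub>R xb i)" using j by (simp add: mat_on_E_xb Q_def)
    also have "\<dots> = y j" using E_expansion y(2) j by simp
    finally show ?thesis .
  qed
  thus ?thesis using iso_of_mat_props(1)[OF O] by blast
qed

definition std_subspace :: "nat \<Rightarrow> 'v set" where "std_subspace r = span (xb ` {..<r})"


lemma std_subspace_props:
  assumes r: "r \<le> p"
  shows "subspace (std_subspace r)" "std_subspace r \<subseteq> E" "dim (std_subspace r) = r"
proof -
  show "subspace (std_subspace r)" unfolding std_subspace_def by simp
  show "std_subspace r \<subseteq> E" unfolding std_subspace_def using xb_E r subspace_E by (intro span_minimal) auto
  show "dim (std_subspace r) = r" unfolding std_subspace_def using orthonormal_seq_dim[OF orthonormal_seq_mono[OF xb_orthonormal r]] .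
qed

lemma Iso_J_transitive:
  assumes U: "subspace U" "U \<subseteq> E" and r: "dim U = r"
  shows "\<exists>\<xi>\<in>Iso_J. \<xi> ` std_subspace r = U"
proof -
  define W where "W = {y \<in> E. \<forall>x\<in>U. x \<bullet> y = 0}"
  have sW: "subspace W" unfolding W_def using subspace_E
    by (auto simp: subspace_def inner_add_right)
  have dW: "dim W = p - r" "r \<le> p"
    using dim_subspace_orthogonal_to_vectors[OF U(1) subspace_E U(2)] dim_E r
    unfolding W_def orthogonal_def by auto
  obtain f where f: "orthonormal_seq r f" "span (f ` {..<r}) = U" "\<forall>i<r. f i \<in> U"
    using orthonormal_seq_basis[OF U(1)] r by blast
  obtain g where g: "orthonormal_seq (p - r) g" "\<forall>i<p - r. g i \<in> W"
    using orthonormal_seq_basis[OF sW] dW by metis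
  define y where "y j = (if j < r then f j else g (j - r))" for j
  have "orthonormal_seq (r + (p - r)) y"
    unfolding y_def using f g by (intro orthonormal_seq_append) (auto simp: W_def)
  hence y: "orthonormal_seq p y" using dW by simp
  have "y j \<in> E" if "j < p" for j using f g U(2) that by (auto simp: y_def W_def)
  then obtain \<xi> where \<xi>: "\<xi> \<in> Iso_J" "\<forall>j<p. \<xi> (xb j) = y j" using Iso_J_map_basis[OF y] by blast
  have "\<xi> ` std_subspace r = span (\<xi> ` xb ` {..<r})"
    unfolding std_subspace_def using linear_span_image[OF Iso_J_linear[OF \<xi>(1)]] by metis
  also have "\<xi> ` xb ` {..<r} = f ` {..<r}" using \<xi>(2) dW by (force simp: y_def image_iff)
  finally show ?thesis using f(2) \<xi>(1) by blast
qed

definition Lag_orbit :: "nat \<Rightarrow> 'v set set" where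
  "Lag_orbit r = {Lam U | U. subspace U \<and> U \<subseteq> E \<and> dim U = r}"

lemma Lam_inj:
  assumes "subspace U" "U \<subseteq> E" "subspace U'" "U' \<subseteq> E" "Lam U = Lam U'"
  shows "U = U'"
  using Lam_inter_E assms by metis

lemma Iso_J_dim: assumes H: "h \<in> Iso_J" shows "dim (h ` U) = dim U"
  using dim_image_eq[OF Iso_J_linear[OF H]] Iso_J_inj[OF H] by (metis inj_on_subset subset_UNIV)

lemma Iso_J_image_subspace: assumes H: "h \<in> Iso_J" "subspace U" "U \<subseteq> E" shows "subspace (h ` U)" "h ` U \<subseteq> E"
  using linear_subspace_image[OF Iso_J_linear[OF H(1)] H(2)] Iso_J_maps_E[OF H(1)] H(3) by auto

lemma Lag_orbit_eq_Iso_J_orbit: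
  assumes r: "r \<le> p"
  shows "Lag_orbit r = {h ` Lam (std_subspace r) | h. h \<in> Iso_J}"
proof
  show "Lag_orbit r \<subseteq> {h ` Lam (std_subspace r) | h. h \<in> Iso_J}"
  proof
    fix L assume "L \<in> Lag_orbit r"
    then obtain U where U: "L = Lam U" "subspace U" "U \<subseteq> E" "dim U = r" unfolding Lag_orbit_def by blast
    obtain h where h: "h \<in> Iso_J" "h ` std_subspace r = U" using Iso_J_transitive[OF U(2,3,4)] by blast
    have "h ` Lam (std_subspace r) = Lam U" using Iso_J_Lam[OF h(1) std_subspace_props(2)[OF r]] h(2) by simp
    thus "L \<in> {h ` Lam (std_subspace r) | h. h \<in> Iso_J}" using U(1) h(1) by blast
  qed
  show "{h ` Lam (std_subspace r) | h. h \<in> Iso_J} \<subseteq> Lag_orbit r"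
  proof
    fix L assume "L \<in> {h ` Lam (std_subspace r) | h. h \<in> Iso_J}"
    then obtain h where h: "h \<in> Iso_J" "L = h ` Lam (std_subspace r)" by blast
    have "L = Lam (h ` std_subspace r)" using Iso_J_Lam[OF h(1) std_subspace_props(2)[OF r]] h(2) by simp
    moreover have "dim (h ` std_subspace r) = r" using Iso_J_dim[OF h(1)] std_subspace_props(3)[OF r] by simp
    ultimately show "L \<in> Lag_orbit r" unfolding Lag_orbit_def using Iso_J_image_subspace[OF h(1) std_subspace_props(1,2)[OF r]] by blast
  qed
qed

lemma Aut_orbit_eq_Lag_orbit:
  assumes L: "L \<in> Lag J"
  shows "{\<xi> ` L | \<xi>. \<xi> \<in> Aut_o J} = Lag_orbit (dim (L \<inter> E))"
proof
  let ?r = "dim (L \<inter> E)"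
  have sLE: "subspace (L \<inter> E)" using L subspace_E unfolding Lag_iff_Je by (blast intro: subspace_inter)
  show "{\<xi> ` L | \<xi>. \<xi> \<in> Aut_o J} \<subseteq> Lag_orbit ?r"
  proof
    fix L' assume "L' \<in> {\<xi> ` L | \<xi>. \<xi> \<in> Aut_o J}"
    then obtain \<xi> where \<xi>: "\<xi> \<in> Aut_o J" "L' = \<xi> ` L" by blast
    have L'Lag: "L' \<in> Lag J" using Aut_Lag[OF \<xi>(1) L] \<xi>(2) by simp
    have "L' = Lam (L' \<inter> E)" using Lag_eq_Lam[OF L'Lag] .
    moreover have "dim (L' \<inter> E) = ?r" using Aut_dim_inter_E[OF \<xi>(1)] \<xi>(2) by simp
    moreover have "subspace (L' \<inter> E)" using L'Lag subspace_E unfolding Lag_iff_Je by (blast intro: subspace_inter)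
    ultimately show "L' \<in> Lag_orbit ?r" unfolding Lag_orbit_def by blast
  qed
  show "Lag_orbit ?r \<subseteq> {\<xi> ` L | \<xi>. \<xi> \<in> Aut_o J}"
  proof
    fix L' assume "L' \<in> Lag_orbit ?r"
    then obtain U where U: "L' = Lam U" "subspace U" "U \<subseteq> E" "dim U = ?r" unfolding Lag_orbit_def by blast
    obtain h1 where h1: "h1 \<in> Iso_J" "h1 ` std_subspace ?r = L \<inter> E" using Iso_J_transitive[OF sLE _ refl] by blast
    obtain h2 where h2: "h2 \<in> Iso_J" "h2 ` std_subspace ?r = U" using Iso_J_transitive[OF U(2,3,4)] by blast
    let ?i = "inv_into UNIV h1"
    have iH: "?i \<in> Iso_J" using Iso_J_inv[OF h1(1)] .
    have "?i ` (L \<inter> E) = std_subspace ?r" using h1 Iso_J_bij[OF h1(1)] by (metis bij_is_inj image_inv_f_f)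
    hence "(h2 \<circ> ?i) ` (L \<inter> E) = U" using h2(2) image_comp[of h2 ?i "L \<inter> E"] by simp
    moreover have cH: "h2 \<circ> ?i \<in> Iso_J" using Iso_J_comp[OF h2(1) iH] .
    moreover have "L = Lam (L \<inter> E)" using Lag_eq_Lam[OF L] .
    ultimately have "(h2 \<circ> ?i) ` L = Lam U" using Iso_J_Lam[OF cH] by (metis inf_le2)
    thus "L' \<in> {\<xi> ` L | \<xi>. \<xi> \<in> Aut_o J}" using U(1) Iso_J_in_Aut[OF cH] by blast
  qed
qed

lemma dim_Lag_inter_E_le: "L \<in> Lag J \<Longrightarrow> dim (L \<inter> E) \<le> p"
  using dim_subset[of "L \<inter> E" E] dim_E by auto

lemma Lam_std_props:
  assumes r: "r \<le> p"
  shows "Lam (std_subspace r) \<in> Lag J" "Lam (std_subspace r) \<in> Lag_orbit r" "dim (Lam (std_subspace r) \<inter> E) = r"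
proof -
  show "Lam (std_subspace r) \<in> Lag J" using Lam_Lag std_subspace_props[OF r] by blast
  show "Lam (std_subspace r) \<in> Lag_orbit r" unfolding Lag_orbit_def using std_subspace_props[OF r] by blast
  show "dim (Lam (std_subspace r) \<inter> E) = r" using Lam_inter_E std_subspace_props[OF r] by simp
qed

lemma Lag_orbits_eq: "Lag_orbits J = Lag_orbit ` {0..p}"
proof
  show "Lag_orbits J \<subseteq> Lag_orbit ` {0..p}"
  proof
    fix Ob assume "Ob \<in> Lag_orbits J"
    then obtain L where L: "L \<in> Lag J" "Ob = {\<xi> ` L | \<xi>. \<xi> \<in> Aut_o J}" unfolding Lag_orbits_def by blast
    thus "Ob \<in> Lag_orbit ` {0..p}" using Aut_orbit_eq_Lag_orbit[OF L(1)] dim_Lag_inter_E_le[OF L(1)] by auto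
  qed
  show "Lag_orbit ` {0..p} \<subseteq> Lag_orbits J"
  proof
    fix Ob assume "Ob \<in> Lag_orbit ` {0..p}"
    then obtain r where r: "r \<le> p" "Ob = Lag_orbit r" by auto
    have "Ob = {\<xi> ` Lam (std_subspace r) | \<xi>. \<xi> \<in> Aut_o J}" using Aut_orbit_eq_Lag_orbit[OF Lam_std_props(1)[OF r(1)]] Lam_std_props(3)[OF r(1)] r(2) by simp
    thus "Ob \<in> Lag_orbits J" unfolding Lag_orbits_def using Lam_std_props(1)[OF r(1)] by blast
  qed
qed

lemma inj_on_Lag_orbit: "inj_on Lag_orbit {0..p}"
proof (rule inj_onI)
  fix r r' assume r: "r \<in> {0..p}" "r' \<in> {0..p}" and eq: "Lag_orbit r = Lag_orbit r'"
  have "Lam (std_subspace r) \<in> Lag_orbit r'" using Lam_std_props(2)[of r] r eq by auto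
  then obtain U where U: "Lam (std_subspace r) = Lam U" "subspace U" "U \<subseteq> E" "dim U = r'" unfolding Lag_orbit_def by blast
  have "std_subspace r = U" using Lam_inj[OF std_subspace_props(1,2) U(2,3) U(1)] r by auto
  thus "r = r'" using std_subspace_props(3) r U(4) by auto
qed

lemma xb_orthogonal_std_subspace: assumes "r \<le> i" "i < p" "u \<in> std_subspace r" shows "xb i \<bullet> u = 0"
proof -
  have "std_subspace r \<subseteq> {u. xb i \<bullet> u = 0}" unfolding std_subspace_def
    using xb_orthonormal assms(1,2) unfolding orthonormal_seq_def
    by (intro span_minimal) (auto simp: subspace_def inner_add_right)
  thus ?thesis using assms(3) by blast
qed

lemma Lam_std_stable_iff:
  assumes r: "r \<le> p" and h: "h \<in> Iso_J"
  shows "h ` Lam (std_subspace r) = Lam (std_subspace r) \<longleftrightarrow> h ` std_subspace r = std_subspace r"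
proof -
  have "h ` Lam (std_subspace r) = Lam (h ` std_subspace r)" using Iso_J_Lam[OF h std_subspace_props(2)[OF r]] .
  thus ?thesis using Lam_inj[OF Iso_J_image_subspace[OF h std_subspace_props(1,2)[OF r]] std_subspace_props(1,2)[OF r]] by metis
qed

lemma block_diagonal_imp_xb_in_std_subspace:
  assumes r: "r \<le> p" and h: "h \<in> Iso_J" and b: "block_diagonal p r (mat_of_iso h)" and j: "j < r"
  shows "h (xb j) \<in> std_subspace r"
proof -
  have jp: "j < p" using j r by simp
  have "h (xb j) = (\<Sum>i<p. (h (xb j) \<bullet> xb i) *\<^sub>R xb i)"
    using E_expansion[OF Iso_J_maps_E[OF h]] xb_E jp by blast
  also have "\<dots> \<in> std_subspace r" unfolding std_subspace_def
  proof (rule span_sum)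
    fix i assume i: "i \<in> {..<p}"
    show "(h (xb j) \<bullet> xb i) *\<^sub>R xb i \<in> span (xb ` {..<r})"
    proof (cases "i < r")
      case True thus ?thesis by (intro span_scale span_base) auto
    next
      case False
      hence "mat_of_iso h i j = 0" using b i j jp unfolding block_diagonal_def by auto
      hence "h (xb j) \<bullet> xb i = 0" using i jp by (simp add: mat_of_iso_def)
      thus ?thesis by (simp add: span_zero)
    qed
  qed
  finally show ?thesis .
qed

lemma std_subspace_stable_iff:
  assumes r: "r \<le> p" and h: "h \<in> Iso_J"
  shows "h ` std_subspace r = std_subspace r \<longleftrightarrow> block_diagonal p r (mat_of_iso h)"
proof
  assume eq: "h ` std_subspace r = std_subspace r"
  show "block_diagonal p r (mat_of_iso h)" unfolding block_diagonal_def
  proof (intro allI impI)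
    fix i j assume ij: "i < p" "j < p" "(i < r) \<noteq> (j < r)"
    show "mat_of_iso h i j = 0"
    proof (cases "j < r")
      case True
      hence ir: "r \<le> i" using ij by auto
      have "xb j \<in> std_subspace r" unfolding std_subspace_def using True by (intro span_base) auto
      hence "h (xb j) \<in> std_subspace r" using eq by blast
      hence "xb i \<bullet> h (xb j) = 0" using xb_orthogonal_std_subspace[OF ir ij(1)] by blast
      thus ?thesis using ij by (simp add: mat_of_iso_def inner_commute)
    next
      case False
      hence ir: "i < r" "r \<le> j" using ij by auto
      have "xb i \<in> std_subspace r" unfolding std_subspace_def using ir by (intro span_base) auto
      then obtain u where u: "u \<in> std_subspace r" "xb i = h u" using eq by blast
      have "h (xb j) \<bullet> xb i = xb j \<bullet> u" using u(2) Iso_J_inner[OF h] by simp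
      also have "\<dots> = 0" using xb_orthogonal_std_subspace[OF ir(2) ij(2) u(1)] .
      finally show ?thesis using ij by (simp add: mat_of_iso_def)
    qed
  qed
next
  assume "block_diagonal p r (mat_of_iso h)"
  hence "h ` xb ` {..<r} \<subseteq> std_subspace r"
    using block_diagonal_imp_xb_in_std_subspace[OF r h] by auto
  hence "span (h ` xb ` {..<r}) \<subseteq> std_subspace r" using std_subspace_props(1)[OF r] by (simp add: span_minimal)
  hence sub: "h ` std_subspace r \<subseteq> std_subspace r"
    unfolding std_subspace_def using linear_span_image[OF Iso_J_linear[OF h]] by metis
  show "h ` std_subspace r = std_subspace r"
    using subspace_dim_equal[OF Iso_J_image_subspace(1)[OF h std_subspace_props(1,2)[OF r]] std_subspace_props(1)[OF r] sub]
      Iso_J_dim[OF h] by simp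
qed

definition stabilizer :: "nat \<Rightarrow> ('v \<Rightarrow> 'v) set" where
  "stabilizer r = {h \<in> Iso_J. h ` Lam (std_subspace r) = Lam (std_subspace r)}"

lemma stabilizer_iff_block_diagonal: assumes "r \<le> p" "h \<in> Iso_J" shows "h \<in> stabilizer r \<longleftrightarrow> block_diagonal p r (mat_of_iso h)"
proof -
  have "h \<in> stabilizer r \<longleftrightarrow> h ` Lam (std_subspace r) = Lam (std_subspace r)" unfolding stabilizer_def using assms(2) by simp
  also have "\<dots> \<longleftrightarrow> h ` std_subspace r = std_subspace r" by (rule Lam_std_stable_iff[OF assms])
  also have "\<dots> \<longleftrightarrow> block_diagonal p r (mat_of_iso h)" by (rule std_subspace_stable_iff[OF assms])
  finally show ?thesis .
qed

lemma mat_of_iso_stabilizer: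
  assumes r: "r \<le> p"
  shows "mat_of_iso ` stabilizer r = {Q \<in> carrier (orth_group p). block_diagonal p r Q}"
proof
  show "mat_of_iso ` stabilizer r \<subseteq> {Q \<in> carrier (orth_group p). block_diagonal p r Q}"
    using stabilizer_iff_block_diagonal[OF r] mat_of_iso_in_orth_group by (auto simp: stabilizer_def)
  show "{Q \<in> carrier (orth_group p). block_diagonal p r Q} \<subseteq> mat_of_iso ` stabilizer r"
  proof clarify
    fix Q assume Q: "Q \<in> carrier (orth_group p)" "block_diagonal p r Q"
    hence "Q \<in> carrier (orth_group p)" by simp
    thus "Q \<in> mat_of_iso ` stabilizer r"
      using stabilizer_iff_block_diagonal[OF r] iso_of_mat_props(1) mat_of_iso_of_mat Q(2) by (metis imageI)
  qed
qed

lemma stabilizer_iso: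
  assumes r: "r \<le> p"
  shows "map_group (stabilizer r) \<cong> DirProd (orth_group r) (orth_group (p - r))"
proof -
  have "stabilizer r \<subseteq> carrier (map_group Iso_J)" by (auto simp: stabilizer_def map_group_def)
  from iso_restrict_carrier[OF mat_of_iso_group_iso this]
  have "mat_of_iso \<in> iso (map_group (stabilizer r))
          ((orth_group p)\<lparr>carrier := {Q \<in> carrier (orth_group p). block_diagonal p r Q}\<rparr>)"
    by (simp add: mat_of_iso_stabilizer[OF r] map_group_def)
  thus ?thesis using iso_set_trans[OF _ block_diagonal_orth_iso[OF r]] unfolding is_iso_def by blast
qed
theorem Lag_orbits_classification:
  "bij_betw Lag_orbit {0..p} (Lag_orbits J) \<and>
   (\<forall>r\<in>{0..p}. \<exists>H L0.
      subgroup H (Aut_group J) \<and> orth_group p \<cong> map_group H \<and>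
      L0 \<in> Lag_orbit r \<and> Lag_orbit r = {h ` L0 | h. h \<in> H} \<and>
      map_group {h \<in> H. h ` L0 = L0} \<cong> DirProd (orth_group r) (orth_group (p - r)))"
proof (intro conjI ballI exI)
  show "bij_betw Lag_orbit {0..p} (Lag_orbits J)"
    unfolding bij_betw_def using inj_on_Lag_orbit Lag_orbits_eq by simp
  fix r assume "r \<in> {0..p}"
  hence r: "r \<le> p" by simp
  show "subgroup Iso_J (Aut_group J)" by (rule Iso_J_subgroup)
  show "orth_group p \<cong> map_group Iso_J" by (rule is_isoI[OF iso_of_mat_group_iso])
  show "Lam (std_subspace r) \<in> Lag_orbit r" by (rule Lam_std_props(2)[OF r])
  show "Lag_orbit r = {h ` Lam (std_subspace r) | h. h \<in> Iso_J}" by (rule Lag_orbit_eq_Iso_J_orbit[OF r])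
  show "map_group {h \<in> Iso_J. h ` Lam (std_subspace r) = Lam (std_subspace r)}
      \<cong> DirProd (orth_group r) (orth_group (p - r))"
    using stabilizer_iso[OF r] unfolding stabilizer_def .
qed

end

theorem proposition5p28:
  fixes J :: "'z::euclidean_space \<Rightarrow> 'v::euclidean_space \<Rightarrow> 'v"
    and p :: nat
  assumes "DIM('z) mod 8 = 0"
    and "clifford_module J"
    and "sum_of_irreducibles J p"
  shows "\<exists>Orb :: nat \<Rightarrow> 'v set set.
           bij_betw Orb {0..p} (Lag_orbits J) \<and>
           (\<forall>r\<in>{0..p}. \<exists>H L0.
              subgroup H (Aut_group J) \<and>
              orth_group p \<cong> map_group H \<and>
              L0 \<in> Orb r \<and>
              Orb r = {h ` L0 | h. h \<in> H} \<and>
              map_group {h \<in> H. h ` L0 = L0} \<cong> DirProd (orth_group r) (orth_group (p - r)))"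
proof -
  obtain e where "clifford_frame_8k J e DIM('z) (DIM('z) div 8)"
    using clifford_frame_8k_exists[OF assms(1,2)] .
  then interpret clifford_frame_8k J e "DIM('z)" "DIM('z) div 8" .
  obtain xb where "\<forall>i<p. xb i \<in> E" "orthonormal_seq p xb" "span (xb ` {..<p}) = E"
    using E_orthonormal_basis[OF assms(3)] .
  then interpret clifford_frame_8k_basis J e "DIM('z)" "DIM('z) div 8" p xb
    by unfold_locales
  show ?thesis using Lag_orbits_classification by blast
qed

end
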